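(* Let $C(m)=\{(Tr(ax))_{x\in L}:a\in\mathcal{R}\}\subseteq R^{|L|}$ and consider the ternary linear code $\phi(C(m))\subseteq\mathbb{F}_3^{3|L|}$. In each of the following cases, $\phi(C(m))$ is optimal, i.e. no ternary linear code of the same length and the same dimension has strictly larger minimum Hamming distance: (i) $m$ is odd and $L=L'$ (so $\phi(C(m))$ has length $(3^{3m+1}-3^{2m+1})/2$); (ii) $m$ is any positive integer and $L=\mathcal{R}^*$ (so $\phi(C(m))$ has length $3^{3m+1}-3^{2m+1}$).
   Context: Let $R=\mathbb{F}_3[u]/(u^3-1)$ and $\mathcal{R}=\mathbb{F}_{3^m}[u]/(u^3-1)=\mathbb{F}_{3^m}+u\mathbb{F}_{3^m}+u^2\mathbb{F}_{3^m}$. Every element of $\mathcal{R}$ is uniquely $x_1+x_2(u-1)+x_3(u-1)^2$ with $x_i\in\mathbb{F}_{3^m}$; $\mathcal{R}^*$ (the units) consists of those with $x_1\neq0$. $Tr:\mathcal{R}\to R$ is $Tr(a+ub+u^2c)=tr(a)+u\,tr(b)+u^2tr(c)$, with $tr$ the absolute trace $\mathbb{F}_{3^m}\to\mathbb{F}_3$. $\mathcal{Q}$ denotes the nonzero squares of $\mathbb{F}_{3^m}$ and $L'=\{x_1+x_2(u-1)+x_3(u-1)^2:x_1\in\mathcal{Q},x_2,x_3\in\mathbb{F}_{3^m}\}$. The Gray map $\phi:R\to\mathbb{F}_3^3$ is $\phi(a'+ub'+u^2c')=(a',b',c')$, extended coordinatewise to $R^n\to\mathbb{F}_3^{3n}$.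 *)

theory Defs
  imports Main
begin

text \<open>An element a + u b + u^2 c of F_{3^m}[u]/(u^3 - 1) is represented by the triple (a, b, c).
  The field F_{3^m} is an arbitrary finite field type 'a with CARD('a) = 3^m.\<close>

type_synonym 'a rtriple = "'a \<times> 'a \<times> 'a"

definition radd :: "'a::comm_ring_1 rtriple \<Rightarrow> 'a rtriple \<Rightarrow> 'a rtriple" where
  "radd x y = (case x of (a0, a1, a2) \<Rightarrow> case y of (b0, b1, b2) \<Rightarrow> (a0 + b0, a1 + b1, a2 + b2))"

definition rscale :: "'a::comm_ring_1 \<Rightarrow> 'a rtriple \<Rightarrow> 'a rtriple" where
  "rscale c x = (case x of (a0, a1, a2) \<Rightarrow> (c * a0, c * a1, c * a2))"

text \<open>Multiplication modulo u^3 = 1.\<close>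
definition rmul :: "'a::comm_ring_1 rtriple \<Rightarrow> 'a rtriple \<Rightarrow> 'a rtriple" where
  "rmul x y = (case x of (a0, a1, a2) \<Rightarrow> case y of (b0, b1, b2) \<Rightarrow>
     (a0 * b0 + a1 * b2 + a2 * b1, a0 * b1 + a1 * b0 + a2 * b2, a0 * b2 + a1 * b1 + a2 * b0))"

definition rone :: "'a::comm_ring_1 rtriple" where
  "rone = (1, 0, 0)"

definition u_minus_1 :: "'a::comm_ring_1 rtriple" where
  "u_minus_1 = (-1, 1, 0)"

definition urep :: "'a::comm_ring_1 \<Rightarrow> 'a \<Rightarrow> 'a \<Rightarrow> 'a rtriple" where
  "urep x1 x2 x3 = radd (rscale x1 rone)
      (radd (rscale x2 u_minus_1) (rscale x3 (rmul u_minus_1 u_minus_1)))"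

definition runits :: "'a::comm_ring_1 rtriple set" where
  "runits = {x. \<exists>y. rmul x y = rone}"

definition nz_squares :: "'a::field set" where
  "nz_squares = {y. y \<noteq> 0 \<and> (\<exists>z. y = z ^ 2)}"

definition L' :: "'a::field rtriple set" where
  "L' = {urep x1 x2 x3 | x1 x2 x3. x1 \<in> nz_squares}"

text \<open>Absolute trace F_{3^m} -> F_3 (values in the prime subfield of 'a).\<close>
definition abs_tr :: "nat \<Rightarrow> 'a::comm_ring_1 \<Rightarrow> 'a" where
  "abs_tr m x = (\<Sum>i<m. x ^ (3 ^ i))"

text \<open>Tr : calR -> R, applied coefficientwise; R-elements are triples over the prime field.\<close>
definition Tr :: "nat \<Rightarrow> 'a::comm_ring_1 rtriple \<Rightarrow> 'a rtriple" where
  "Tr m x = (case x of (a, b, c) \<Rightarrow> (abs_tr m a, abs_tr m b, abs_tr m c))"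

text \<open>F_3 is represented by the integers {0,1,2} with arithmetic modulo 3.
  An element of the prime subfield {0, 1, 1+1} of 'a is identified with 0, 1, 2.\<close>
definition to_F3 :: "'a::comm_ring_1 \<Rightarrow> int" where
  "to_F3 t = (if t = 0 then 0 else if t = 1 then 1 else 2)"

definition gray :: "'a::comm_ring_1 rtriple \<Rightarrow> int list" where
  "gray r = (case r of (a', b', c') \<Rightarrow> [to_F3 a', to_F3 b', to_F3 c'])"

definition gray_vec :: "'a::comm_ring_1 rtriple list \<Rightarrow> int list" where
  "gray_vec v = concat (map gray v)"

text \<open>The code C(m) with coordinates indexed by the enumeration xs of L, and its Gray image.\<close>
definition code_C :: "nat \<Rightarrow> 'a::comm_ring_1 rtriple list \<Rightarrow> 'a rtriple list set" where
  "code_C m xs = {map (\<lambda>x. Tr m (rmul a x)) xs | a. True}"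

definition gray_code :: "nat \<Rightarrow> 'a::comm_ring_1 rtriple list \<Rightarrow> int list set" where
  "gray_code m xs = gray_vec ` code_C m xs"

definition ter_words :: "nat \<Rightarrow> int list set" where
  "ter_words n = {w. length w = n \<and> set w \<subseteq> {0, 1, 2}}"

definition ter_add :: "int list \<Rightarrow> int list \<Rightarrow> int list" where
  "ter_add v w = map2 (\<lambda>x y. (x + y) mod 3) v w"

definition ter_smult :: "int \<Rightarrow> int list \<Rightarrow> int list" where
  "ter_smult c w = map (\<lambda>x. (c * x) mod 3) w"

definition ternary_linear_code :: "nat \<Rightarrow> int list set \<Rightarrow> bool" where
  "ternary_linear_code n C \<longleftrightarrow> C \<subseteq> ter_words n \<and> replicate n 0 \<in> C \<and>
     (\<forall>v\<in>C. \<forall>w\<in>C. ter_add v w \<in> C) \<and> (\<forall>c\<in>{0, 1, 2}. \<forall>w\<in>C. ter_smult c w \<in> C)"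

definition ter_span :: "nat \<Rightarrow> int list list \<Rightarrow> int list set" where
  "ter_span n B = {foldr ter_add (map2 ter_smult cs B) (replicate n 0) | cs.
                     length cs = length B \<and> set cs \<subseteq> {0, 1, 2}}"

definition ter_dim :: "nat \<Rightarrow> int list set \<Rightarrow> nat" where
  "ter_dim n C = (LEAST k. \<exists>B. set B \<subseteq> C \<and> length B = k \<and> ter_span n B = C)"

definition hamming :: "int list \<Rightarrow> int list \<Rightarrow> nat" where
  "hamming v w = card {i. i < length v \<and> v ! i \<noteq> w ! i}"

definition min_dist :: "int list set \<Rightarrow> nat" where
  "min_dist C = Min {hamming v w | v w. v \<in> C \<and> w \<in> C \<and> v \<noteq> w}"

definition optimal_ternary :: "nat \<Rightarrow> int list set \<Rightarrow> bool" where
  "optimal_ternary n C \<longleftrightarrow> ternary_linear_code n C \<and>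
     (\<forall>C'. ternary_linear_code n C' \<and> ter_dim n C' = ter_dim n C \<longrightarrow> min_dist C' \<le> min_dist C)"

end

(*
  The ternary code phi(C(m)) has 3^(3m) words.  Multiplication by u permutes the coordinates of a
  codeword cyclically, so the weight of the codeword of b is three times the number of units x
  for which the first coordinate of b x has nonzero trace.  In the coordinates (augment x, x1, x2)
  that first coordinate is an affine form; its level sets are planes, and since the trace takes
  each value of F_3 equally often, the weight is at least 2 q^2 (q - 1) for L = R^*, q = 3^m.  For
  odd m, -1 is a non-square, negation swaps L' with its complement in R^*, and the weight is at
  least q^2 (q - 1).

  A ternary linear code with 3^k words and minimum distance d has length at least
  sum_{i<k} ceil(d / 3^i) (Griesmer bound, proved by passing to the residual code of a
  minimum-weight word).  For k = 3m and d one more than the weight bound this sum exceeds the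
  length of phi(C(m)), so no code of that length and dimension has larger minimum distance.
*)

theory Submission
  imports Defs "HOL-Number_Theory.Residues" "HOL-Computational_Algebra.Polynomial"
begin

section \<open>The Griesmer bound\<close>

text \<open>\<open>griesmer k d = (\<Sum>i<k. \<lceil>d / 3^i\<rceil>)\<close>, since \<open>\<lceil>\<lceil>d/3\<rceil> / 3^i\<rceil> = \<lceil>d / 3^(i+1)\<rceil>\<close>.\<close>
fun griesmer :: "nat \<Rightarrow> nat \<Rightarrow> nat" where
  "griesmer 0 d = 0"
| "griesmer (Suc k) d = d + griesmer k ((d + 2) div 3)"

definition tadd :: "(nat \<Rightarrow> int) \<Rightarrow> (nat \<Rightarrow> int) \<Rightarrow> nat \<Rightarrow> int" where
  "tadd f g = (\<lambda>i. (f i + g i) mod 3)"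

definition hweight :: "(nat \<Rightarrow> int) \<Rightarrow> nat" where
  "hweight f = card {i. f i \<noteq> 0}"

text \<open>Codewords are functions supported on the finite index set \<open>I\<close>; closure under addition
  suffices for linearity over \<open>\<F>\<^sub>3\<close>, since \<open>2 f = f + f\<close>.\<close>
locale ternary_fun_code =
  fixes I :: "nat set" and C :: "(nat \<Rightarrow> int) set"
  assumes finite_I: "finite I" and finite_C: "finite C"
    and code_values: "f \<in> C \<Longrightarrow> f i \<in> {0, 1, 2}"
    and code_support: "f \<in> C \<Longrightarrow> i \<notin> I \<Longrightarrow> f i = 0"
    and zero_in_code: "(\<lambda>_. 0) \<in> C"
    and tadd_closed: "f \<in> C \<Longrightarrow> g \<in> C \<Longrightarrow> tadd f g \<in> C"
begin

lemma hweight_eq_sum: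
  assumes "f \<in> C" shows "hweight f = (\<Sum>i\<in>I. if f i \<noteq> 0 then 1 else 0)"
proof -
  have "{i. f i \<noteq> 0} = {i\<in>I. f i \<noteq> 0}" using code_support[OF assms] by blast
  then show ?thesis using finite_I by (simp add: hweight_def sum.If_cases Int_def)
qed

lemma code_mod3 [simp]: "f \<in> C \<Longrightarrow> f i mod 3 = f i"
  using code_values[of f i] by auto

lemma finite_support: "f \<in> C \<Longrightarrow> finite {i. f i \<noteq> 0}"
  using code_support by (blast intro: finite_subset[OF _ finite_I])

lemma hweight_pos: "f \<in> C \<Longrightarrow> f \<noteq> (\<lambda>_. 0) \<Longrightarrow> 0 < hweight f"
  using finite_support by (auto simp: hweight_def card_gt_0_iff)

end

lemma weight_coset_pointwise:
  fixes a c :: int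
  assumes "a \<in> {0, 1, 2}" "c \<in> {0, 1, 2}"
  shows "(if a \<noteq> 0 then 1 else 0) + (if (a + c) mod 3 \<noteq> 0 then 1 else 0)
           + (if ((a + c) mod 3 + c) mod 3 \<noteq> 0 then 1 else 0)
         = (if c \<noteq> 0 then 2 else if a \<noteq> 0 then 3 else (0::nat))"
  using assms by (elim insertE emptyE) simp_all

lemma mod3_cancel:
  fixes a c :: int
  assumes "a \<in> {0, 1, 2}" "c \<in> {0, 1, 2}"
  shows "(a + c) mod 3 = 0 \<Longrightarrow> a = (c + c) mod 3" "((a + c) mod 3 + c) mod 3 = 0 \<Longrightarrow> a = c"
  using assms by (elim insertE emptyE; simp)+

lemma mod3_add_thrice:
  fixes a b :: int
  shows "a \<in> {0, 1, 2} \<Longrightarrow> b \<in> {0, 1, 2} \<Longrightarrow> (((a + b) mod 3 + b) mod 3 + b) mod 3 = a"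
  by (elim insertE emptyE) simp_all

locale min_weight_codeword = ternary_fun_code +
  fixes c :: "nat \<Rightarrow> int"
  assumes c_in_code: "c \<in> C" and c_nonzero: "c \<noteq> (\<lambda>_. 0)"
    and c_min_weight: "f \<in> C \<Longrightarrow> f \<noteq> (\<lambda>_. 0) \<Longrightarrow> hweight c \<le> hweight f"
begin

text \<open>The residual code deletes the coordinates in the support of the minimum-weight word \<open>c\<close>.\<close>
definition residual :: "(nat \<Rightarrow> int) \<Rightarrow> nat \<Rightarrow> int" where
  "residual f = (\<lambda>i. if c i = 0 then f i else 0)"

abbreviation "residual_index \<equiv> I - {i. c i \<noteq> 0}"

lemma weight_coset_sum:
  assumes f: "f \<in> C"
  shows "hweight f + hweight (tadd f c) + hweight (tadd (tadd f c) c)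
         = 2 * hweight c + 3 * hweight (residual f)"
proof -
  have "hweight (residual f) = (\<Sum>i\<in>I. if c i = 0 \<and> f i \<noteq> 0 then 1 else 0)"
  proof -
    have "{i. residual f i \<noteq> 0} = {i\<in>I. c i = 0 \<and> f i \<noteq> 0}"
      using code_support[OF f] by (auto simp: residual_def)
    then show ?thesis using finite_I by (simp add: hweight_def sum.If_cases Int_def)
  qed
  moreover have "hweight c = (\<Sum>i\<in>I. if c i \<noteq> 0 then 1 else 0)"
    by (rule hweight_eq_sum[OF c_in_code])
  moreover have "hweight f + hweight (tadd f c) + hweight (tadd (tadd f c) c)
      = (\<Sum>i\<in>I. (if f i \<noteq> 0 then 1 else 0) + (if tadd f c i \<noteq> 0 then 1 else 0)
                  + (if tadd (tadd f c) c i \<noteq> 0 then 1 else 0))"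
    using f c_in_code by (simp add: hweight_eq_sum tadd_closed sum.distrib)
  moreover have "\<dots> = (\<Sum>i\<in>I. 2 * (if c i \<noteq> 0 then 1 else 0) + 3 * (if c i = 0 \<and> f i \<noteq> 0 then 1 else 0))"
    using weight_coset_pointwise[OF code_values[OF f] code_values[OF c_in_code]]
    by (intro sum.cong) (auto simp: tadd_def)
  ultimately show ?thesis by (simp add: sum.distrib sum_distrib_left)
qed

lemma residual_tadd: "residual (tadd f g) = tadd (residual f) (residual g)"
  by (auto simp: residual_def tadd_def)

lemma residual_code: "ternary_fun_code residual_index (residual ` C)"
proof
  show "finite residual_index" using finite_I by simp
  show "finite (residual ` C)" using finite_C by simp
  show "f \<in> residual ` C \<Longrightarrow> f i \<in> {0, 1, 2}" for f i
  proof -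
    assume "f \<in> residual ` C"
    then obtain g where "g \<in> C" "f = residual g" by blast
    then show ?thesis using code_values[of g i] by (simp add: residual_def)
  qed
  show "f \<in> residual ` C \<Longrightarrow> i \<notin> residual_index \<Longrightarrow> f i = 0" for f i
    using code_support by (auto simp: residual_def)
  show "(\<lambda>_. 0) \<in> residual ` C"
    using zero_in_code by (force simp: residual_def)
  show "f \<in> residual ` C \<Longrightarrow> g \<in> residual ` C \<Longrightarrow> tadd f g \<in> residual ` C" for f g
    using tadd_closed by (auto simp flip: residual_tadd)
qed

text \<open>Each of \<open>f\<close>, \<open>f + c\<close>, \<open>f + 2c\<close> has weight at least \<open>hweight c\<close>, while their weights
  sum to \<open>2 hweight c + 3 hweight (residual f)\<close>.\<close>
lemma weight_le_three_residual:
  assumes "f \<in> C" "f \<noteq> (\<lambda>_. 0)" "tadd f c \<noteq> (\<lambda>_. 0)" "tadd (tadd f c) c \<noteq> (\<lambda>_. 0)"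
  shows "hweight c \<le> 3 * hweight (residual f)"
  using weight_coset_sum[OF assms(1)] c_min_weight[OF assms(1,2)]
    c_min_weight[OF tadd_closed[OF assms(1) c_in_code] assms(3)]
    c_min_weight[OF tadd_closed[OF tadd_closed[OF assms(1) c_in_code] c_in_code] assms(4)]
  by linarith

lemma residual_kernel:
  assumes f: "f \<in> C" and res0: "residual f = (\<lambda>_. 0)"
  shows "f \<in> {(\<lambda>_. 0), c, tadd c c}"
proof -
  have "hweight c > 0" using hweight_pos[OF c_in_code c_nonzero] .
  moreover have "hweight (residual f) = 0" using res0 by (simp add: hweight_def)
  ultimately have "f = (\<lambda>_. 0) \<or> tadd f c = (\<lambda>_. 0) \<or> tadd (tadd f c) c = (\<lambda>_. 0)"
    using weight_le_three_residual[OF f] by fastforce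
  moreover have fv: "f i \<in> {0, 1, 2}" and cv: "c i \<in> {0, 1, 2}" for i
    using code_values f c_in_code by blast+
  ultimately show ?thesis
  proof (elim disjE)
    assume "tadd f c = (\<lambda>_. 0)"
    then have "f i = tadd c c i" for i
      using mod3_cancel(1)[OF fv cv, of i] by (simp add: tadd_def fun_eq_iff)
    then show ?thesis by auto
  next
    assume "tadd (tadd f c) c = (\<lambda>_. 0)"
    then have "f i = c i" for i
      using mod3_cancel(2)[OF fv cv, of i] by (simp add: tadd_def fun_eq_iff)
    then show ?thesis by auto
  qed simp
qed

lemma tadd_cancel: "f \<in> C \<Longrightarrow> g \<in> C \<Longrightarrow> tadd (tadd (tadd g f) f) f = g"
  unfolding tadd_def fun_eq_iff using code_values mod3_add_thrice by blast

lemma card_residual_fiber: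
  assumes f: "f \<in> C"
  shows "card {g\<in>C. residual g = residual f} \<le> 3"
proof -
  have "{g\<in>C. residual g = residual f} \<subseteq> (\<lambda>k. tadd k f) ` {(\<lambda>_. 0), c, tadd c c}"
  proof
    fix g assume g: "g \<in> {g\<in>C. residual g = residual f}"
    define k where "k = tadd (tadd g f) f" \<comment> \<open>\<open>k = g - f\<close>, which lies in the kernel of \<open>residual\<close>\<close>
    have "k \<in> C" unfolding k_def using g f by (simp add: tadd_closed)
    moreover have "residual k = (\<lambda>_. 0)"
    proof
      fix i
      have "c i = 0 \<Longrightarrow> g i = f i" using g by (auto simp: residual_def dest: fun_cong[of _ _ i])
      then show "residual k i = 0" using code_values[OF f, of i] by (auto simp: k_def residual_def tadd_def)
    qed
    ultimately have "k \<in> {(\<lambda>_. 0), c, tadd c c}" by (rule residual_kernel)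
    moreover have "g = tadd k f" unfolding k_def using g f by (simp add: tadd_cancel)
    ultimately show "g \<in> (\<lambda>k. tadd k f) ` {(\<lambda>_. 0), c, tadd c c}" by blast
  qed
  then have "card {g\<in>C. residual g = residual f} \<le> card ((\<lambda>k. tadd k f) ` {(\<lambda>_. 0), c, tadd c c})"
    by (intro card_mono) auto
  also have "\<dots> \<le> 3" by (rule order_trans[OF card_image_le]) (auto simp: card_insert_if)
  finally show ?thesis .
qed

lemma card_le_three_card_residual: "card C \<le> 3 * card (residual ` C)"
proof -
  have "card C = card (\<Union>r\<in>residual ` C. {g\<in>C. residual g = r})" by (rule arg_cong[of _ _ card]) auto
  also have "\<dots> \<le> (\<Sum>r\<in>residual ` C. card {g\<in>C. residual g = r})" by (rule card_UN_le) (simp add: finite_C)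
  also have "\<dots> \<le> (\<Sum>r\<in>residual ` C. 3)" by (rule sum_mono) (auto intro: card_residual_fiber)
  finally show ?thesis by simp
qed

lemma residual_weight:
  assumes "f \<in> C" "residual f \<noteq> (\<lambda>_. 0)"
  shows "hweight c \<le> 3 * hweight (residual f)"
proof (rule weight_le_three_residual[OF assms(1)])
  have "residual (tadd f c) = residual f" "residual (tadd (tadd f c) c) = residual f"
    using assms(1) by (auto simp: residual_def tadd_def fun_eq_iff)
  moreover have "residual (\<lambda>_. 0) = (\<lambda>_. 0)" by (simp add: residual_def)
  ultimately show "f \<noteq> (\<lambda>_. 0)" "tadd f c \<noteq> (\<lambda>_. 0)" "tadd (tadd f c) c \<noteq> (\<lambda>_. 0)"
    using assms(2) by metis+
qed

lemma card_index_split: "card I = hweight c + card residual_index"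
proof -
  have "{i. c i \<noteq> 0} \<subseteq> I" using code_support[OF c_in_code] by blast
  then show ?thesis using finite_I by (simp add: hweight_def card_Diff_subset finite_subset card_mono)
qed

end

theorem (in ternary_fun_code) griesmer_bound:
  assumes "3 ^ k \<le> card C" and "\<And>f. f \<in> C \<Longrightarrow> f \<noteq> (\<lambda>_. 0) \<Longrightarrow> d \<le> hweight f"
  shows "griesmer k d \<le> card I"
  using ternary_fun_code_axioms assms
proof (induction k arbitrary: I C d)
  case 0
  then show ?case by simp
next
  case (Suc k)
  interpret ternary_fun_code I C by (fact Suc.prems(1))
  have "\<exists>f\<in>C. f \<noteq> (\<lambda>_. 0)"
  proof (rule ccontr)
    assume "\<not> ?thesis"
    then have "C \<subseteq> {\<lambda>_. 0}" by auto
    then have "card C \<le> 1" using card_mono[of "{\<lambda>_. 0}" C] by simp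
    moreover have "3 \<le> (3::nat) ^ Suc k" by simp
    ultimately show False using Suc.prems(2) by linarith
  qed
  then obtain c where c: "c \<in> C \<and> c \<noteq> (\<lambda>_. 0)"
    and c_min: "\<And>f. f \<in> C \<and> f \<noteq> (\<lambda>_. 0) \<Longrightarrow> hweight c \<le> hweight f"
    using ex_has_least_nat[of "\<lambda>f. f \<in> C \<and> f \<noteq> (\<lambda>_. 0)"] by blast
  interpret min_weight_codeword I C c by unfold_locales (use c c_min in auto)
  have d_le: "d \<le> hweight c" using Suc.prems(3) c by blast
  have "griesmer k ((d + 2) div 3) \<le> card residual_index"
  proof (rule Suc.IH[OF residual_code])
    show "3 ^ k \<le> card (residual ` C)" using Suc.prems(2) card_le_three_card_residual by simp
    show "(d + 2) div 3 \<le> hweight g" if "g \<in> residual ` C" "g \<noteq> (\<lambda>_. 0)" for g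
      using that residual_weight d_le by fastforce
  qed
  then show ?case using card_index_split d_le by simp
qed

section \<open>Ternary linear codes as lists\<close>

lemma ter_add_nth [simp]: "j < length v \<Longrightarrow> j < length w \<Longrightarrow> ter_add v w ! j = (v ! j + w ! j) mod 3"
  by (simp add: ter_add_def)

lemma length_ter_add [simp]: "length (ter_add v w) = min (length v) (length w)"
  by (simp add: ter_add_def)

lemma ter_smult_nth [simp]: "j < length v \<Longrightarrow> ter_smult c v ! j = (c * v ! j) mod 3"
  by (simp add: ter_smult_def)

lemma length_ter_smult [simp]: "length (ter_smult c v) = length v"
  by (simp add: ter_smult_def)

lemma ter_words_nth: "w \<in> ter_words n \<Longrightarrow> j < n \<Longrightarrow> w ! j \<in> {0, 1, 2}"
  unfolding ter_words_def by (auto dest: nth_mem)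

lemma ternary_linear_code_finite: "ternary_linear_code n C \<Longrightarrow> finite C"
  unfolding ternary_linear_code_def ter_words_def
  by (rule finite_subset[of _ "{xs. set xs \<subseteq> {0, 1, 2::int} \<and> length xs = n}"])
     (auto simp: finite_lists_length_eq)

lemma ter_smult_one: "w \<in> ter_words n \<Longrightarrow> ter_smult 1 w = w"
  unfolding ter_words_def ter_smult_def by (auto intro!: map_idI)

lemma ter_smult_zero: "w \<in> ter_words n \<Longrightarrow> ter_smult 0 w = replicate n 0"
  unfolding ter_words_def ter_smult_def by (auto simp: map_replicate_const)

definition lincomb :: "nat \<Rightarrow> int list \<Rightarrow> int list list \<Rightarrow> int list" where
  "lincomb n cs B = foldr ter_add (map2 ter_smult cs B) (replicate n 0)"

lemma lincomb_Cons: "lincomb n (c # cs) (v # B) = ter_add (ter_smult c v) (lincomb n cs B)"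
  by (simp add: lincomb_def)

lemma lincomb_nth:
  assumes "length cs = length B" and "\<forall>v\<in>set B. length v = n"
  shows "length (lincomb n cs B) = n \<and>
    (\<forall>j<n. lincomb n cs B ! j = (\<Sum>i<length B. cs ! i * B ! i ! j) mod 3)"
  using assms
proof (induction B arbitrary: cs)
  case Nil
  then show ?case by (simp add: lincomb_def)
next
  case (Cons v B)
  then obtain c cs' where cs: "cs = c # cs'" by (cases cs) auto
  have IH: "length (lincomb n cs' B) = n"
    "\<And>j. j < n \<Longrightarrow> lincomb n cs' B ! j = (\<Sum>i<length B. cs' ! i * B ! i ! j) mod 3"
    using Cons cs by simp_all
  have "lincomb n cs (v # B) ! j = (\<Sum>i<length (v # B). cs ! i * (v # B) ! i ! j) mod 3" if "j < n" for j
  proof -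
    have "lincomb n cs (v # B) ! j = ((c * v ! j) mod 3 + (\<Sum>i<length B. cs' ! i * B ! i ! j) mod 3) mod 3"
      using IH that Cons.prems by (simp add: cs lincomb_Cons)
    also have "\<dots> = (\<Sum>i<length (v # B). cs ! i * (v # B) ! i ! j) mod 3"
      by (simp add: cs mod_add_eq sum.lessThan_Suc_shift del: sum.lessThan_Suc)
    finally show ?thesis .
  qed
  then show ?case using IH Cons.prems by (simp add: cs lincomb_Cons)
qed

lemma ter_span_eq_image:
  "ter_span n B = (\<lambda>cs. lincomb n cs B) ` {cs. set cs \<subseteq> {0, 1, 2} \<and> length cs = length B}"
  unfolding ter_span_def lincomb_def by auto

lemma card_ter_span_le: "card (ter_span n B) \<le> 3 ^ length B"
proof -
  have "card (ter_span n B) \<le> card {cs. set cs \<subseteq> {0, 1, 2::int} \<and> length cs = length B}"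
    unfolding ter_span_eq_image by (rule card_image_le) (simp add: finite_lists_length_eq)
  also have "\<dots> = 3 ^ length B" by (simp add: card_lists_length_eq numeral_3_eq_3)
  finally show ?thesis .
qed

lemma ter_span_Nil: "ter_span n [] = {replicate n 0}"
  by (auto simp: ter_span_eq_image lincomb_def)

lemma ter_span_Cons:
  "ter_span n (v # B) = (\<lambda>(c, w). ter_add (ter_smult c v) w) ` ({0, 1, 2} \<times> ter_span n B)"
proof -
  define Cs where "Cs = {cs. set cs \<subseteq> {0, 1, 2::int} \<and> length cs = length B}"
  have "{cs. set cs \<subseteq> {0, 1, 2} \<and> length cs = length (v # B)} = (\<lambda>(c, cs). c # cs) ` ({0, 1, 2} \<times> Cs)"
    by (auto simp: Cs_def image_iff length_Suc_conv)
  moreover have "{0, 1, 2::int} \<times> (\<lambda>cs. lincomb n cs B) ` Cs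
      = (\<lambda>(c, cs). (c, lincomb n cs B)) ` ({0, 1, 2} \<times> Cs)"
    by (simp add: image_paired_Times[of id, simplified])
  ultimately show ?thesis
    by (simp add: ter_span_eq_image Cs_def[symmetric] image_image lincomb_Cons case_prod_beta)
qed

lemma ter_span_subset: "ternary_linear_code n C \<Longrightarrow> set B \<subseteq> C \<Longrightarrow> ter_span n B \<subseteq> C"
  by (induction B) (auto simp: ter_span_Nil ter_span_Cons ternary_linear_code_def)

lemma sum_mod_mult_left: "(\<Sum>i\<in>A. (f i mod m) * g i) mod m = (\<Sum>i\<in>A. f i * g i) mod (m::int)"
proof -
  have "(\<Sum>i\<in>A. (f i mod m) * g i) mod m = (\<Sum>i\<in>A. (f i mod m) * g i mod m) mod m"
    by (simp add: mod_sum_eq)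
  also have "\<dots> = (\<Sum>i\<in>A. f i * g i mod m) mod m" by (simp add: mod_mult_left_eq)
  also have "\<dots> = (\<Sum>i\<in>A. f i * g i) mod m" by (simp add: mod_sum_eq)
  finally show ?thesis .
qed

lemma ter_span_combination:
  assumes B: "\<forall>v\<in>set B. length v = n" and w: "w \<in> ter_span n B" and w': "w' \<in> ter_span n B"
  shows "map (\<lambda>j. (a * w ! j + b * w' ! j) mod 3) [0..<n] \<in> ter_span n B"
proof -
  obtain cs where cs: "set cs \<subseteq> {0, 1, 2}" "length cs = length B" "w = lincomb n cs B"
    using w unfolding ter_span_eq_image by auto
  obtain cs' where cs': "set cs' \<subseteq> {0, 1, 2}" "length cs' = length B" "w' = lincomb n cs' B"
    using w' unfolding ter_span_eq_image by auto
  define ds where "ds = map (\<lambda>i. (a * cs ! i + b * cs' ! i) mod 3) [0..<length B]"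
  have ds: "set ds \<subseteq> {0, 1, 2}" "length ds = length B" unfolding ds_def by auto
  have "map (\<lambda>j. (a * w ! j + b * w' ! j) mod 3) [0..<n] = lincomb n ds B"
  proof (rule nth_equalityI)
    show "length (map (\<lambda>j. (a * w ! j + b * w' ! j) mod 3) [0..<n]) = length (lincomb n ds B)"
      using lincomb_nth[OF ds(2) B] by simp
    fix j assume "j < length (map (\<lambda>j. (a * w ! j + b * w' ! j) mod 3) [0..<n])"
    then have j: "j < n" by simp
    have "lincomb n ds B ! j = (\<Sum>i<length B. ((a * cs ! i + b * cs' ! i) mod 3) * B ! i ! j) mod 3"
      using lincomb_nth[OF ds(2) B] j by (simp add: ds_def)
    also have "\<dots> = (\<Sum>i<length B. (a * cs ! i + b * cs' ! i) * B ! i ! j) mod 3"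
      by (rule sum_mod_mult_left)
    also have "\<dots> = (a * (\<Sum>i<length B. cs ! i * B ! i ! j) + b * (\<Sum>i<length B. cs' ! i * B ! i ! j)) mod 3"
      by (simp add: algebra_simps sum.distrib sum_distrib_left)
    also have "\<dots> = (a * ((\<Sum>i<length B. cs ! i * B ! i ! j) mod 3)
                        + b * ((\<Sum>i<length B. cs' ! i * B ! i ! j) mod 3)) mod 3"
      by (intro mod_add_cong mod_mult_cong) simp_all
    also have "\<dots> = (a * w ! j + b * w' ! j) mod 3"
      using lincomb_nth[OF cs(2) B] lincomb_nth[OF cs'(2) B] j cs(3) cs'(3) by simp
    finally show "map (\<lambda>j. (a * w ! j + b * w' ! j) mod 3) [0..<n] ! j = lincomb n ds B ! j"
      using j by simp
  qed
  then show ?thesis using ds unfolding ter_span_eq_image by auto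
qed

lemma mod3_solve:
  fixes c c' v w w' :: int
  assumes c: "c \<in> {0, 1, 2}" "c' \<in> {0, 1, 2}" and v: "v \<in> {0, 1, 2}" and w: "w \<in> {0, 1, 2}" "w' \<in> {0, 1, 2}"
    and eq: "((c * v) mod 3 + w) mod 3 = ((c' * v) mod 3 + w') mod 3"
  shows "c = c' \<Longrightarrow> w = w'" and "c \<noteq> c' \<Longrightarrow> v = ((c - c') * w' + (c' - c) * w) mod 3"
proof -
  have "(c * v + w) mod 3 = (c' * v + w') mod 3" using eq by (simp add: mod_add_left_eq)
  then have "(c * v + w - (c' * v + w)) mod 3 = (c' * v + w' - (c' * v + w)) mod 3"
    by (rule mod_diff_cong) simp
  then have diff: "((c - c') * v) mod 3 = (w' - w) mod 3" by (simp add: algebra_simps)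
  show "c = c' \<Longrightarrow> w = w'"
  proof -
    assume "c = c'"
    with diff have "w' mod 3 = w mod 3" by (simp add: mod_eq_dvd_iff dvd_eq_mod_eq_0)
    then show "w = w'" using w by auto
  qed
  show "c \<noteq> c' \<Longrightarrow> v = ((c - c') * w' + (c' - c) * w) mod 3"
  proof -
    assume "c \<noteq> c'" \<comment> \<open>then \<open>c - c' = \<plusminus>1 (mod 3)\<close> is its own inverse\<close>
    then have "((c - c') * (c - c')) mod 3 = 1 mod 3" using c by (elim insertE emptyE) simp_all
    then have "((c - c') * (c - c') * v) mod 3 = (1 * v) mod 3" by (rule mod_mult_cong) simp
    also have "((c - c') * (c - c') * v) mod 3 = ((c - c') * (w' - w)) mod 3"
      unfolding mult.assoc using diff by (rule mod_mult_cong[OF refl])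
    finally have "v mod 3 = ((c - c') * (w' - w)) mod 3" by simp
    moreover have "(c - c') * w' + (c' - c) * w = (c - c') * (w' - w)" by (simp add: algebra_simps)
    moreover have "v mod 3 = v" using v by auto
    ultimately show ?thesis by simp
  qed
qed

lemma card_ter_span_Cons:
  assumes lin: "ternary_linear_code n C" and B: "set B \<subseteq> C"
    and v: "v \<in> C" "v \<notin> ter_span n B"
  shows "card (ter_span n (v # B)) = 3 * card (ter_span n B)"
proof -
  have words: "C \<subseteq> ter_words n" using lin by (simp add: ternary_linear_code_def)
  have span: "ter_span n B \<subseteq> C" using ter_span_subset[OF lin B] .
  have lengths: "\<forall>u\<in>set B. length u = n" using B words by (auto simp: ter_words_def)
  have "inj_on (\<lambda>(c, w). ter_add (ter_smult c v) w) ({0, 1, 2} \<times> ter_span n B)"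
  proof (rule inj_onI, clarify)
    fix c w c' w'
    assume c: "c \<in> {0, 1, 2}" "c' \<in> {0, 1, 2}" and w: "w \<in> ter_span n B" "w' \<in> ter_span n B"
      and eq: "ter_add (ter_smult c v) w = ter_add (ter_smult c' v) w'"
    have ww: "v \<in> ter_words n" "w \<in> ter_words n" "w' \<in> ter_words n" using v w span words by auto
    then have len: "length v = n" "length w = n" "length w' = n" by (auto simp: ter_words_def)
    have eq_nth: "((c * v ! j) mod 3 + w ! j) mod 3 = ((c' * v ! j) mod 3 + w' ! j) mod 3" if "j < n" for j
      using arg_cong[OF eq, of "\<lambda>u. u ! j"] that len by simp
    have solve: "(c = c' \<longrightarrow> w ! j = w' ! j) \<and> (c \<noteq> c' \<longrightarrow> v ! j = ((c - c') * w' ! j + (c' - c) * w ! j) mod 3)"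
      if "j < n" for j
      using mod3_solve[OF c ter_words_nth[OF ww(1) that] ter_words_nth[OF ww(2) that]
          ter_words_nth[OF ww(3) that] eq_nth[OF that]] by blast
    show "c = c' \<and> w = w'"
    proof (cases "c = c'")
      case True
      then show ?thesis using solve len by (auto intro: nth_equalityI)
    next
      case False
      have "map (\<lambda>j. ((c - c') * w' ! j + (c' - c) * w ! j) mod 3) [0..<n] \<in> ter_span n B"
        by (rule ter_span_combination[OF lengths w(2) w(1)])
      moreover have "map (\<lambda>j. ((c - c') * w' ! j + (c' - c) * w ! j) mod 3) [0..<n] = v"
        using solve False len by (auto intro: nth_equalityI)
      ultimately show ?thesis using v(2) by simp
    qed
  qed
  then have "card (ter_span n (v # B)) = card ({0, 1, 2::int} \<times> ter_span n B)"
    unfolding ter_span_Cons by (rule card_image)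
  then show ?thesis by (simp add: card_cartesian_product)
qed

lemma ex_ter_basis:
  assumes lin: "ternary_linear_code n C"
  shows "\<exists>B. set B \<subseteq> C \<and> ter_span n B = C \<and> card C = 3 ^ length B"
proof -
  have "\<exists>B. set B \<subseteq> C \<and> ter_span n B = C \<and> card C = 3 ^ length B"
    if "set B \<subseteq> C" "card (ter_span n B) = 3 ^ length B" for B
    using that
  proof (induction "card C - card (ter_span n B)" arbitrary: B rule: less_induct)
    case (less B)
    show ?case
    proof (cases "ter_span n B = C")
      case True
      then show ?thesis using less.prems by auto
    next
      case False
      then obtain v where v: "v \<in> C" "v \<notin> ter_span n B"
        using ter_span_subset[OF lin less.prems(1)] by auto
      have triple: "card (ter_span n (v # B)) = 3 * card (ter_span n B)"
        by (rule card_ter_span_Cons[OF lin less.prems(1) v])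
      have "card (ter_span n (v # B)) \<le> card C"
        using ter_span_subset[OF lin] less.prems(1) v(1)
        by (intro card_mono[OF ternary_linear_code_finite[OF lin]]) simp
      moreover have "card (ter_span n B) > 0" using less.prems(2) by simp
      ultimately have "card C - card (ter_span n (v # B)) < card C - card (ter_span n B)"
        using triple by linarith
      moreover have "set (v # B) \<subseteq> C" using less.prems(1) v(1) by simp
      moreover have "card (ter_span n (v # B)) = 3 ^ length (v # B)" using triple less.prems(2) by simp
      ultimately show ?thesis by (rule less.hyps)
    qed
  qed
  from this[of "[]"] show ?thesis by (simp add: ter_span_Nil)
qed

lemma card_eq_ter_dim:
  assumes lin: "ternary_linear_code n C"
  shows "card C = 3 ^ ter_dim n C"
proof -
  obtain B where B: "set B \<subseteq> C" "ter_span n B = C" "card C = 3 ^ length B"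
    using ex_ter_basis[OF lin] by blast
  let ?spans = "\<lambda>k. \<exists>B. set B \<subseteq> C \<and> length B = k \<and> ter_span n B = C"
  have spans: "?spans (length B)" using B by blast
  then have "?spans (ter_dim n C)" unfolding ter_dim_def by (rule LeastI)
  then obtain B' where B': "set B' \<subseteq> C" "length B' = ter_dim n C" "ter_span n B' = C" by blast
  have le: "ter_dim n C \<le> length B" unfolding ter_dim_def by (rule Least_le[of ?spans, OF spans])
  have "card C \<le> 3 ^ ter_dim n C" using card_ter_span_le[of n B'] B' by simp
  moreover have "3 ^ ter_dim n C \<le> card C" using B(3) le by simp
  ultimately show ?thesis by simp
qed

definition fun_of_word :: "int list \<Rightarrow> nat \<Rightarrow> int" where
  "fun_of_word w = (\<lambda>i. if i < length w then w ! i else 0)"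

lemma ternary_fun_code_fun_of_word:
  assumes lin: "ternary_linear_code n C"
  shows "ternary_fun_code {..<n} (fun_of_word ` C)"
proof -
  have words: "C \<subseteq> ter_words n" using lin by (simp add: ternary_linear_code_def)
  then have len: "w \<in> C \<Longrightarrow> length w = n" for w by (auto simp: ter_words_def)
  show ?thesis
  proof
    show "finite {..<n}" by simp
    show "finite (fun_of_word ` C)" using ternary_linear_code_finite[OF lin] by simp
    show "f \<in> fun_of_word ` C \<Longrightarrow> f i \<in> {0, 1, 2}" for f i
    proof -
      assume "f \<in> fun_of_word ` C"
      then obtain w where w: "w \<in> C" "f = fun_of_word w" by blast
      then show ?thesis using ter_words_nth[of w n i] words len[OF w(1)] by (auto simp: fun_of_word_def)
    qed
    show "f \<in> fun_of_word ` C \<Longrightarrow> i \<notin> {..<n} \<Longrightarrow> f i = 0" for f i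
      using len by (auto simp: fun_of_word_def)
    show "(\<lambda>_. 0) \<in> fun_of_word ` C"
      using lin by (intro image_eqI[of _ _ "replicate n 0"]) (auto simp: fun_of_word_def ternary_linear_code_def)
    show "tadd f g \<in> fun_of_word ` C" if fg: "f \<in> fun_of_word ` C" "g \<in> fun_of_word ` C" for f g
    proof -
      obtain v w where vw: "v \<in> C" "w \<in> C" "f = fun_of_word v" "g = fun_of_word w" using fg by blast
      have "tadd f g = fun_of_word (ter_add v w)"
        using len[OF vw(1)] len[OF vw(2)] by (simp add: vw(3,4) fun_of_word_def tadd_def fun_eq_iff)
      moreover have "ter_add v w \<in> C" using lin vw by (simp add: ternary_linear_code_def)
      ultimately show ?thesis by blast
    qed
  qed
qed

lemma inj_on_fun_of_word:
  assumes "\<And>w. w \<in> C \<Longrightarrow> length w = n"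
  shows "inj_on fun_of_word C"
proof (rule inj_onI)
  fix v w assume vw: "v \<in> C" "w \<in> C" "fun_of_word v = fun_of_word w"
  show "v = w"
  proof (rule nth_equalityI)
    show "length v = length w" using assms vw by simp
    show "v ! i = w ! i" if "i < length v" for i
      using fun_cong[OF vw(3), of i] that assms vw(1,2) by (simp add: fun_of_word_def)
  qed
qed

theorem ternary_linear_code_griesmer:
  assumes lin: "ternary_linear_code n C" and card: "3 ^ k \<le> card C"
    and dist: "\<forall>v\<in>C. \<forall>w\<in>C. v \<noteq> w \<longrightarrow> d \<le> hamming v w"
  shows "griesmer k d \<le> n"
proof -
  have len: "w \<in> C \<Longrightarrow> length w = n" for w
    using lin by (auto simp: ternary_linear_code_def ter_words_def)
  have zero: "replicate n 0 \<in> C" using lin by (simp add: ternary_linear_code_def)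
  interpret ternary_fun_code "{..<n}" "fun_of_word ` C" by (rule ternary_fun_code_fun_of_word[OF lin])
  have "griesmer k d \<le> card {..<n}"
  proof (rule griesmer_bound)
    show "3 ^ k \<le> card (fun_of_word ` C)" using card card_image[OF inj_on_fun_of_word[OF len]] by simp
    show "d \<le> hweight f" if f: "f \<in> fun_of_word ` C" and nz: "f \<noteq> (\<lambda>_. 0)" for f
    proof -
      obtain w where w: "w \<in> C" "f = fun_of_word w" using f by blast
      then have "w \<noteq> replicate n 0" using nz by (auto simp: fun_of_word_def)
      then have "d \<le> hamming w (replicate n 0)" using dist w(1) zero by blast
      also have "hamming w (replicate n 0) = hweight f"
        unfolding hamming_def hweight_def w(2) fun_of_word_def using len[OF w(1)]
        by (intro arg_cong[of _ _ card]) auto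
      finally show ?thesis .
    qed
  qed
  then show ?thesis by simp
qed

corollary min_dist_le_if_griesmer_exceeds:
  assumes lin: "ternary_linear_code n C" and card: "3 ^ k \<le> card C"
    and exceeds: "n < griesmer k (d + 1)"
  shows "min_dist C \<le> d"
proof (rule ccontr)
  assume gt: "\<not> min_dist C \<le> d"
  let ?D = "{hamming v w | v w. v \<in> C \<and> w \<in> C \<and> v \<noteq> w}"
  have "?D \<subseteq> (\<lambda>(v, w). hamming v w) ` (C \<times> C)" by fast
  then have fin: "finite ?D" by (rule finite_subset) (simp add: ternary_linear_code_finite[OF lin])
  have "\<forall>v\<in>C. \<forall>w\<in>C. v \<noteq> w \<longrightarrow> d + 1 \<le> hamming v w"
  proof (intro ballI impI)
    fix v w assume "v \<in> C" "w \<in> C" "v \<noteq> w"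
    then have "min_dist C \<le> hamming v w" unfolding min_dist_def by (intro Min_le[OF fin]) blast
    then show "d + 1 \<le> hamming v w" using gt by linarith
  qed
  from ternary_linear_code_griesmer[OF lin card this] show False using exceeds by simp
qed

section \<open>Griesmer sums at the parameters of \<open>C(m)\<close>\<close>

lemma griesmer_geometric:
  "griesmer (Suc s + r) (3 ^ s * b + 1) = (\<Sum>i\<le>s. 3 ^ i * b + 1) + griesmer r ((b + 3) div 3)"
proof (induction s)
  case 0
  then show ?case by (simp add: add.commute)
next
  case (Suc s)
  have "(3 ^ Suc s * b + 1 + 2) div 3 = 3 ^ s * b + 1" by simp
  then show ?case using Suc by simp
qed

lemma griesmer_power_multiple: "2 * griesmer r (c * 3 ^ r) + 3 * c = c * 3 ^ (r + 1)"
proof (induction r)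
  case 0
  then show ?case by simp
next
  case (Suc r)
  have "(c * 3 ^ Suc r + 2) div 3 = c * 3 ^ r" by simp
  then show ?case using Suc by simp
qed

lemma geometric_sum_three: "2 * (\<Sum>i\<le>s. (3::nat) ^ i) + 1 = 3 ^ (s + 1)"
  by (induction s) auto

text \<open>In fact \<open>2 griesmer (3m) (c q\<^sup>2 (q - 1) + 1) = 3 c q\<^sup>2 (q - 1) + 4m + 2 - 2c\<close> for \<open>q = 3^m\<close>.\<close>
lemma griesmer_exceeds:
  assumes "m > 0" and c: "c \<in> {1, 2}"
  shows "3 * c * (3 ^ m) ^ 2 * (3 ^ m - 1) < 2 * griesmer (3 * m) (c * (3 ^ m) ^ 2 * (3 ^ m - 1) + 1)"
proof -
  obtain p where m: "m = Suc p" using assms by (cases m) auto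
  define q :: nat where "q = 3 ^ m"
  have q: "q = 3 * 3 ^ p" unfolding q_def m by simp
  define b where "b = c * (q - 1)"
  define S where "S = (\<Sum>i\<le>2 * m. (3::nat) ^ i)"
  define g where "g = griesmer p (c * 3 ^ p)"
  have "(1::nat) \<le> 3 ^ p" by simp
  then have "b + 3 = 3 * (c * 3 ^ p) + (3 - c)" using c unfolding b_def q by (auto simp: diff_mult_distrib2)
  then have b_div: "(b + 3) div 3 = c * 3 ^ p" using c by auto
  have "3 * m = Suc (2 * m) + p" by (simp add: m)
  moreover have "c * q ^ 2 * (q - 1) = 3 ^ (2 * m) * b"
    by (simp add: b_def q_def power_mult[symmetric] mult.commute mult.left_commute)
  ultimately have "griesmer (3 * m) (c * q ^ 2 * (q - 1) + 1) = griesmer (Suc (2 * m) + p) (3 ^ (2 * m) * b + 1)"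
    by (simp only:)
  also have "\<dots> = (\<Sum>i\<le>2 * m. 3 ^ i * b + 1) + griesmer p ((b + 3) div 3)"
    by (rule griesmer_geometric)
  also have "\<dots> = b * S + (2 * m + 1) + g"
    unfolding S_def sum.distrib sum_distrib_left b_div g_def by (simp add: mult.commute)
  finally have T: "griesmer (3 * m) (c * q ^ 2 * (q - 1) + 1) = b * S + (2 * m + 1) + g" .
  have "2 * S + 1 = 3 * q ^ 2"
    using geometric_sum_three[of "2 * m"] by (simp add: S_def q_def power_mult[symmetric] mult.commute)
  then have S: "2 * int S = 3 * int q ^ 2 - 1" by (simp add: algebra_simps flip: of_nat_power)
  have "2 * g + 3 * c = c * q" using griesmer_power_multiple[of p c] by (simp add: g_def q)
  then have "int (2 * g + 3 * c) = int (c * q)" by (rule arg_cong)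
  then have g: "2 * int g = int c * int q - 3 * int c" by simp
  have q1: "q \<ge> 1" by (simp add: q)
  then have b: "int b = int c * int q - int c" by (simp add: b_def of_nat_diff right_diff_distrib)
  have "int (2 * (b * S + (2 * m + 1) + g)) = int b * (2 * int S) + 4 * int m + 2 + 2 * int g"
    by (simp add: algebra_simps)
  also have "\<dots> = int (3 * c * q ^ 2 * (q - 1)) + 4 * int m + 2 - 2 * int c"
    using q1 unfolding S g b by (simp add: of_nat_diff algebra_simps power2_eq_square)
  finally have "int (2 * (b * S + (2 * m + 1) + g)) = int (3 * c * q ^ 2 * (q - 1)) + 4 * int m + 2 - 2 * int c" .
  moreover have "2 * int c < 4 * int m + 2" using c \<open>m > 0\<close> by auto
  ultimately have "int (3 * c * q ^ 2 * (q - 1)) < int (2 * (b * S + (2 * m + 1) + g))" by linarith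
  then show ?thesis unfolding T[symmetric] q_def of_nat_less_iff .
qed

section \<open>Finite fields of order \<open>3^m\<close>\<close>

locale char_three_field =
  fixes m :: nat and field_type :: "'a::{field, finite} itself"
  assumes card_field: "card (UNIV :: 'a set) = 3 ^ m" and m_pos: "0 < m"
begin

lemma three_eq_zero: "(3::'a) = 0"
proof -
  have "prime CHAR('a)" by (rule prime_CHAR_semidom) (simp add: finite_imp_CHAR_pos)
  moreover have "CHAR('a) dvd 3 ^ m" using CHAR_dvd_CARD[where 'a='a] card_field by simp
  ultimately have "CHAR('a) dvd 3" using prime_dvd_power by blast
  then have "of_nat 3 = (0::'a)" by (simp only: of_nat_eq_0_iff_char_dvd)
  then show ?thesis by simp
qed

lemma two_eq_minus_one: "(2::'a) = -1"
proof -
  have "(2::'a) + 1 = 3" by simp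
  then have "(2::'a) + 1 = 0" using three_eq_zero by simp
  then show ?thesis by (simp add: eq_neg_iff_add_eq_0)
qed

lemma one_neq_minus_one: "(1::'a) \<noteq> -1"
proof
  assume "(1::'a) = -1"
  then have "(1::'a) + 1 = 0" by simp
  then have "(2::'a) = 0" by (simp add: one_add_one)
  then show False using two_eq_minus_one by simp
qed

lemma frobenius: "(x + y) ^ (3 ^ i) = x ^ (3 ^ i) + (y::'a) ^ (3 ^ i)"
proof (induction i)
  case 0
  then show ?case by simp
next
  case (Suc i)
  have cube: "(u + v) ^ 3 = u ^ 3 + (v::'a) ^ 3" for u v
  proof -
    have "(u + v) ^ 3 = u ^ 3 + v ^ 3 + 3 * (u ^ 2 * v + u * v ^ 2)"
      by (simp add: algebra_simps power2_eq_square power3_eq_cube)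
    then show ?thesis by (simp add: three_eq_zero)
  qed
  have "(x + y) ^ 3 ^ Suc i = ((x + y) ^ 3 ^ i) ^ 3" by (simp add: power_mult[symmetric] mult.commute)
  also have "\<dots> = (x ^ 3 ^ i) ^ 3 + (y ^ 3 ^ i) ^ 3" by (simp only: Suc cube)
  also have "\<dots> = x ^ 3 ^ Suc i + y ^ 3 ^ Suc i" by (simp add: power_mult[symmetric] mult.commute)
  finally show ?case .
qed

text \<open>Multiplication by a nonzero \<open>x\<close> permutes the nonzero elements.\<close>
lemma power_card_minus_one:
  assumes "(x::'a) \<noteq> 0" shows "x ^ (3 ^ m - 1) = 1"
proof -
  let ?P = "\<Prod>y\<in>UNIV - {0::'a}. y"
  have "?P = (\<Prod>y\<in>UNIV - {0}. x * y)"
    by (rule prod.reindex_bij_witness[of _ "\<lambda>y. x * y" "\<lambda>y. y / x"]) (use assms in auto)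
  also have "\<dots> = (\<Prod>y\<in>UNIV - {0::'a}. x) * ?P" by (rule prod.distrib)
  also have "(\<Prod>y\<in>UNIV - {0::'a}. x) = x ^ (3 ^ m - 1)" by (simp add: card_field card_Diff_singleton)
  finally have "?P = x ^ (3 ^ m - 1) * ?P" .
  moreover have "?P \<noteq> 0" by (subst prod_zero_iff) auto
  ultimately show ?thesis using mult_cancel_right1 by blast
qed

lemma power_card: "(x::'a) ^ (3 ^ m) = x"
proof (cases "x = 0")
  case False
  have "x ^ (3 ^ m) = x ^ Suc (3 ^ m - 1)" by simp
  also have "\<dots> = x" by (simp only: power_Suc power_card_minus_one[OF False] mult_1_right)
  finally show ?thesis .
qed (simp add: m_pos)

lemma frobenius_sum: "finite A \<Longrightarrow> (\<Sum>i\<in>A. f i) ^ (3 ^ j) = (\<Sum>i\<in>A. (f i :: 'a) ^ (3 ^ j))"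
  by (induction A rule: finite_induct) (simp_all add: frobenius)

abbreviation tr :: "'a \<Rightarrow> 'a" where "tr \<equiv> abs_tr m"

lemma tr_add: "tr (x + y) = tr x + tr y"
  by (simp add: abs_tr_def frobenius sum.distrib)

lemma tr_minus: "tr (- x) = - tr x"
  by (simp add: abs_tr_def sum_negf)

lemma tr_diff: "tr (x - y) = tr x - tr y"
  using tr_add[of x "- y"] by (simp add: tr_minus)

lemma tr_zero: "tr 0 = 0"
  by (simp add: abs_tr_def zero_power)

lemma tr_cube: "tr x ^ 3 = tr x"
proof -
  define g where "g i = x ^ (3 ^ i)" for i
  have "tr x ^ 3 = (\<Sum>i<m. g (Suc i))"
    using frobenius_sum[of "{..<m}" "\<lambda>i. x ^ 3 ^ i" 1]
    by (simp add: abs_tr_def g_def power_mult[symmetric] mult.commute)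
  also have "\<dots> = (\<Sum>i<m. g i)"
    using sum.lessThan_Suc_shift[of g m] power_card by (simp add: g_def)
  finally show ?thesis by (simp add: abs_tr_def g_def)
qed

lemma tr_values: "tr x \<in> {0, 1, -1}"
proof -
  have "tr x * (tr x - 1) * (tr x + 1) = 0"
    using tr_cube[of x] by (simp add: algebra_simps power3_eq_cube)
  then show ?thesis by (auto simp: eq_neg_iff_add_eq_0)
qed

text \<open>\<open>tr\<close> is a nonzero polynomial of degree \<open>3^(m-1) < 3^m\<close>, so it cannot vanish on all of the field.\<close>
lemma tr_not_identically_zero: "\<exists>x. tr x \<noteq> 0"
proof (rule ccontr)
  assume "\<not> ?thesis"
  then have all: "\<And>x. tr x = 0" by simp
  define p :: "'a poly" where "p = (\<Sum>i<m. monom 1 (3 ^ i))"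
  have eval: "poly p x = tr x" for x by (simp add: p_def abs_tr_def poly_sum poly_monom)
  have coeff: "coeff p k = (\<Sum>i<m. if 3 ^ i = k then 1 else 0)" for k
    by (simp add: p_def coeff_sum coeff_monom)
  obtain m' where m': "m = Suc m'" using m_pos by (cases m) auto
  have "coeff p (3 ^ m') = (\<Sum>i<m. if i = m' then 1 else 0)"
    unfolding coeff by (intro sum.cong) auto
  also have "\<dots> = 1" using m' by simp
  finally have "p \<noteq> 0" by auto
  have deg: "degree p \<le> 3 ^ m'"
  proof (rule degree_le, intro allI impI)
    fix k :: nat assume k: "3 ^ m' < k"
    have "(3::nat) ^ i \<noteq> k" if "i < m" for i
      using power_increasing[of i m' 3] that m' k by auto
    then show "coeff p k = 0" unfolding coeff by simp
  qed
  have "card {x. poly p x = 0} \<le> degree p" by (rule card_poly_roots_bound[OF \<open>p \<noteq> 0\<close>])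
  moreover have "{x. poly p x = 0} = UNIV" using eval all by auto
  ultimately have "3 ^ m \<le> degree p" using card_field by simp
  moreover have "(3::nat) ^ m' < 3 ^ m" using m' by simp
  ultimately show False using deg by linarith
qed

lemma card_tr_shift:
  assumes "tr c = 1" shows "card {x. tr x = t + 1} = card {x. tr x = t}"
proof -
  have "(\<lambda>x. x + c) ` {x. tr x = t} = {x. tr x = t + 1}"
  proof (rule subset_antisym)
    show "(\<lambda>x. x + c) ` {x. tr x = t} \<subseteq> {x. tr x = t + 1}" using assms by (auto simp: tr_add)
    show "{x. tr x = t + 1} \<subseteq> (\<lambda>x. x + c) ` {x. tr x = t}"
    proof
      fix y assume "y \<in> {x. tr x = t + 1}"
      then have "tr (y - c) = t" using assms by (simp add: tr_diff)
      then show "y \<in> (\<lambda>x. x + c) ` {x. tr x = t}" by (intro image_eqI[of _ _ "y - c"]) auto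
    qed
  qed
  moreover have "inj_on (\<lambda>x. x + c) {x. tr x = t}" by (auto simp: inj_on_def)
  ultimately show ?thesis by (metis card_image)
qed

text \<open>The trace takes the three values of the prime field equally often.\<close>
lemma card_tr_nonzero: "3 * card {x. tr x \<noteq> 0} = 2 * 3 ^ m"
proof -
  obtain x0 where x0: "tr x0 \<noteq> 0" using tr_not_identically_zero by blast
  define c where "c = (if tr x0 = 1 then x0 else - x0)"
  have c: "tr c = 1" using tr_values[of x0] x0 by (auto simp: c_def tr_minus)
  define A where "A t = {x. tr x = t}" for t
  have A1: "card (A 1) = card (A 0)" using card_tr_shift[OF c, of 0] by (simp add: A_def)
  have A2: "card (A (-1)) = card (A 1)"
    using card_tr_shift[OF c, of 1] by (simp add: A_def one_add_one two_eq_minus_one)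
  have univ: "UNIV = A 0 \<union> (A 1 \<union> A (-1))" and nonzero: "{x. tr x \<noteq> 0} = A 1 \<union> A (-1)"
    using tr_values by (auto simp: A_def)
  have "A 1 \<inter> A (-1) = {}" using one_neq_minus_one by (auto simp: A_def)
  moreover have "A 0 \<inter> (A 1 \<union> A (-1)) = {}" by (auto simp: A_def)
  ultimately have "card (UNIV :: 'a set) = card (A 0) + (card (A 1) + card (A (-1)))"
    and "card {x. tr x \<noteq> 0} = card (A 1) + card (A (-1))"
    unfolding univ nonzero by (simp_all add: card_Un_disjoint)
  then show ?thesis using A1 A2 card_field by simp
qed

lemma card_tr_scaled_nonzero:
  assumes "t \<noteq> 0" shows "card {l. tr (l * t) \<noteq> 0} = card {x. tr x \<noteq> 0}"
proof -
  have "bij_betw (\<lambda>l. l * t) {l. tr (l * t) \<noteq> 0} {x. tr x \<noteq> 0}"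
    by (rule bij_betw_byWitness[of _ "\<lambda>x. x / t"]) (use assms in auto)
  then show ?thesis by (rule bij_betw_same_card)
qed

lemma card_nonzero: "card {t::'a. t \<noteq> 0} = 3 ^ m - 1"
proof -
  have "{t::'a. t \<noteq> 0} = UNIV - {0}" by auto
  then show ?thesis by (simp add: card_Diff_singleton card_field)
qed

lemma card_nz_squares: "2 * card (nz_squares :: 'a set) = 3 ^ m - 1"
proof -
  have "{z::'a. z \<noteq> 0} = (\<Union>t\<in>nz_squares. {z. z ^ 2 = t})"
  proof (intro subset_antisym subsetI)
    fix z :: 'a assume "z \<in> {z. z \<noteq> 0}"
    then have "z ^ 2 \<in> nz_squares" by (auto simp: nz_squares_def)
    then show "z \<in> (\<Union>t\<in>nz_squares. {z. z ^ 2 = t})" by blast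
  qed (auto simp: nz_squares_def)
  moreover have "card {z. z ^ 2 = t} = 2" if t: "t \<in> nz_squares" for t :: 'a
  proof -
    obtain a where a: "t = a ^ 2" using t unfolding nz_squares_def by blast
    with t have a_nz: "a \<noteq> 0" by (auto simp: nz_squares_def)
    have "z ^ 2 = t \<longleftrightarrow> z = a \<or> z = -a" for z :: 'a
    proof -
      have "z ^ 2 = t \<longleftrightarrow> z ^ 2 - a ^ 2 = 0" by (simp add: a)
      also have "z ^ 2 - a ^ 2 = (z - a) * (z + a)" by (simp add: algebra_simps power2_eq_square)
      also have "\<dots> = 0 \<longleftrightarrow> z - a = 0 \<or> z + a = 0" by (rule mult_eq_0_iff)
      finally show ?thesis by (simp add: eq_neg_iff_add_eq_0)
    qed
    then have "{z. z ^ 2 = t} = {a, -a}" by blast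
    moreover have "a \<noteq> -a"
    proof
      assume "a = -a"
      then have "a + a = 0" using eq_neg_iff_add_eq_0 by blast
      then have "2 * a = 0" by (simp only: mult_2)
      then show False using a_nz by (simp add: two_eq_minus_one)
    qed
    ultimately show ?thesis by simp
  qed
  moreover have "card (\<Union>t\<in>nz_squares. {z::'a. z ^ 2 = t}) = (\<Sum>t\<in>nz_squares. card {z::'a. z ^ 2 = t})"
    by (rule card_UN_disjoint) auto
  ultimately have "card {z::'a. z \<noteq> 0} = (\<Sum>t\<in>(nz_squares :: 'a set). 2)" by simp
  then show ?thesis using card_nonzero by simp
qed

text \<open>For odd \<open>m\<close>, \<open>3^m = 3 (mod 4)\<close>, so \<open>z^(3^m - 1) = (z\<^sup>2)^((3^m - 1) div 2)\<close> is an odd power of \<open>z\<^sup>2\<close>.\<close>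
lemma minus_one_not_square:
  assumes "odd m" shows "(-1::'a) \<noteq> z ^ 2"
proof
  assume z: "-1 = z ^ 2"
  obtain j where j: "m = Suc (2 * j)" using assms by (auto elim: oddE)
  have "(9::nat) ^ j mod 4 = 1" using power_mod[of "9::nat" 4 j] by simp
  moreover have "(3::nat) ^ m mod 4 = 3 * (9 ^ j mod 4) mod 4"
    by (simp add: j power_mult mod_mult_right_eq)
  ultimately have "(3::nat) ^ m mod 4 = 3" by simp
  moreover have "N mod 4 = 3 \<Longrightarrow> N - 1 = 2 * (2 * (N div 4) + 1)" for N :: nat by presburger
  ultimately have "(3::nat) ^ m - 1 = 2 * (2 * (3 ^ m div 4) + 1)" by blast
  then have "z ^ (3 ^ m - 1) = (z ^ 2) ^ (2 * (3 ^ m div 4) + 1)" by (simp only: power_mult)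
  then have "z ^ (3 ^ m - 1) = - 1" by (simp flip: z)
  moreover have "z \<noteq> 0" using z by auto
  then have "z ^ (3 ^ m - 1) = 1" by (rule power_card_minus_one)
  ultimately show False using one_neq_minus_one by simp
qed

lemma nz_squares_iff_minus_not:
  assumes "odd m" and "(t::'a) \<noteq> 0"
  shows "t \<in> nz_squares \<longleftrightarrow> - t \<notin> nz_squares"
proof -
  have not_both: "\<not> (s \<in> nz_squares \<and> - s \<in> nz_squares)" for s :: 'a
  proof
    assume "s \<in> nz_squares \<and> - s \<in> nz_squares"
    then obtain a b where a: "s = a ^ 2" "s \<noteq> 0" and b: "- s = b ^ 2" by (auto simp: nz_squares_def)
    have "(b / a) ^ 2 = - s / s" by (simp add: power_divide a(1) flip: b)
    then have "-1 = (b / a) ^ 2" using a(2) by simp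
    then show False using minus_one_not_square[OF assms(1)] by blast
  qed
  let ?Q = "nz_squares :: 'a set"
  have "?Q \<inter> uminus ` ?Q = {}" using not_both by auto
  moreover have "card (uminus ` ?Q) = card ?Q" by (intro card_image inj_onI) simp
  ultimately have "card (?Q \<union> uminus ` ?Q) = card (UNIV - {0 :: 'a})"
    using card_nz_squares card_field by (simp add: card_Un_disjoint card_Diff_singleton)
  moreover have "?Q \<union> uminus ` ?Q \<subseteq> UNIV - {0}" by (auto simp: nz_squares_def)
  ultimately have "?Q \<union> uminus ` ?Q = UNIV - {0}" by (intro card_subset_eq) auto
  then have "t \<in> nz_squares \<or> - t \<in> nz_squares" using assms(2) by (auto simp: image_iff)
  then show ?thesis using not_both[of t] by blast
qed

end

section \<open>The ring \<open>\<F>[u]/(u^3 - 1)\<close>\<close>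

text \<open>The augmentation \<open>u \<mapsto> 1\<close>, a ring homomorphism onto the field.\<close>
definition augment :: "'a::comm_ring_1 rtriple \<Rightarrow> 'a" where
  "augment x = (case x of (a, b, c) \<Rightarrow> a + b + c)"

lemma augment_rmul: "augment (rmul x y) = augment x * augment y"
  by (cases x; cases y) (simp add: augment_def rmul_def algebra_simps)

lemma augment_urep: "augment (urep x1 x2 x3) = x1"
  by (simp add: augment_def urep_def radd_def rscale_def rone_def u_minus_1_def rmul_def algebra_simps)

lemma urep_eq: "urep x1 x2 x3 = (x1 - x2 + x3, x2 - 2 * x3, x3)"
  by (simp add: urep_def radd_def rscale_def rone_def u_minus_1_def rmul_def algebra_simps)

lemma urep_augment: "x = urep (augment x) (fst (snd x) + 2 * snd (snd x)) (snd (snd x))"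
  by (cases x) (simp add: urep_eq augment_def algebra_simps)

lemma card_augment_coordinates:
  "card {x::'a::comm_ring_1 rtriple. P (augment x) (fst (snd x)) (snd (snd x))} = card {(t, y, z). P t y z}"
proof (rule bij_betw_same_card)
  show "bij_betw (\<lambda>x. (augment x, fst (snd x), snd (snd x))) {x. P (augment x) (fst (snd x)) (snd (snd x))}
      {(t, y, z). P t y z}"
    by (rule bij_betw_byWitness[of _ "\<lambda>(t, y, z). (t - y - z, y, z)"]) (auto simp: augment_def)
qed

lemma rmul_diff:
  "rmul (radd a (rscale (-1) a')) x = (fst (rmul a x) - fst (rmul a' x),
     fst (snd (rmul a x)) - fst (snd (rmul a' x)), snd (snd (rmul a x)) - snd (snd (rmul a' x)))"
  by (cases a; cases a'; cases x) (simp add: rmul_def radd_def rscale_def algebra_simps)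

lemma rmul_radd:
  "rmul (radd a a') x = (fst (rmul a x) + fst (rmul a' x),
     fst (snd (rmul a x)) + fst (snd (rmul a' x)), snd (snd (rmul a x)) + snd (snd (rmul a' x)))"
  by (cases a; cases a'; cases x) (simp add: rmul_def radd_def algebra_simps)

lemma rmul_rscale_left: "rmul (rscale l a) x = rscale l (rmul a x)"
  by (cases a; cases x) (simp add: rmul_def rscale_def algebra_simps)

lemma radd_minus_eq_0: "radd a (rscale (-1) a') = (0, 0, 0) \<longleftrightarrow> a = (a' :: 'a::comm_ring_1 rtriple)"
  by (cases a; cases a') (auto simp: radd_def rscale_def)

lemma rmul_rscale_right: "rmul b (rscale l x) = rscale l (rmul b x)"
  by (cases b; cases x) (simp add: rmul_def rscale_def algebra_simps)

lemma augment_rscale: "augment (rscale l x) = l * augment x"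
  by (cases x) (simp add: augment_def rscale_def algebra_simps)

lemma rscale_minus_one_involutive: "rscale (-1) (rscale (-1) x) = (x :: 'a::comm_ring_1 rtriple)"
  by (cases x) (simp add: rscale_def)

context char_three_field
begin

lemma urep_char_three: "urep x1 x2 x3 = (x1 - x2 + x3, x2 + x3, x3 :: 'a)"
  by (simp add: urep_eq two_eq_minus_one)

text \<open>In characteristic 3, \<open>(u - 1)^3 = u^3 - 1 = 0\<close>, so \<open>urep\<close> multiplies like truncated power series in \<open>u - 1\<close>.\<close>
lemma rmul_urep:
  "rmul (urep a b c) (urep d e f) = urep (a * d) (a * e + b * d) (a * f + b * e + c * (d :: 'a))"
proof -
  have drop3: "x = y + 3 * z \<Longrightarrow> x = y" for x y z :: 'a by (simp add: three_eq_zero)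
  have "(a - b + c) * (f :: 'a) + (b + c) * (e + f) + c * (d - e + f) = a * f + b * e + c * d"
    by (rule drop3[where z = "c * f"]) (simp add: algebra_simps)
  moreover have "(a - b + c) * (e + f) + (b + c) * (d - e + f) + c * (f :: 'a)
      = a * e + b * d + (a * f + b * e + c * d)"
    by (rule drop3[where z = "c * f - b * e"]) (simp add: algebra_simps)
  moreover have "(a - b + c) * (d - e + f) + (b + c) * f + c * (e + f :: 'a)
      = a * d - (a * e + b * d) + (a * f + b * e + c * d)"
    by (rule drop3[where z = "c * f"]) (simp add: algebra_simps)
  ultimately show ?thesis by (simp add: urep_char_three rmul_def)
qed

lemma runits_eq: "runits = {x::'a rtriple. augment x \<noteq> 0}"
proof (intro subset_antisym subsetI)
  fix x :: "'a rtriple" assume "x \<in> runits"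
  then obtain y where "rmul x y = rone" by (auto simp: runits_def)
  then have "augment (rmul x y) = 1" by (simp add: rone_def augment_def)
  then have "augment x * augment y = 1" unfolding augment_rmul .
  then show "x \<in> {x. augment x \<noteq> 0}" by auto
next
  fix x :: "'a rtriple" assume "x \<in> {x. augment x \<noteq> 0}"
  then have ax: "augment x \<noteq> 0" by simp
  obtain a b c where x: "x = urep a b c" and a: "a = augment x" using urep_augment by blast
  have "a \<noteq> 0" using ax a by simp
  then have e1: "a * (1 / a) = 1" and e2: "a * (- b / a ^ 2) + b * (1 / a) = 0"
    and e3: "a * ((b ^ 2 - a * c) / a ^ 3) + b * (- b / a ^ 2) + c * (1 / a) = 0"
    by (simp_all add: field_simps power2_eq_square power3_eq_cube)
  have "rmul x (urep (1 / a) (- b / a ^ 2) ((b ^ 2 - a * c) / a ^ 3)) = urep 1 0 0"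
    unfolding x rmul_urep e1 e2 e3 ..
  moreover have "rone = urep 1 0 (0 :: 'a)" by (simp add: urep_char_three rone_def)
  ultimately have "rmul x (urep (1 / a) (- b / a ^ 2) ((b ^ 2 - a * c) / a ^ 3)) = rone" by (simp only:)
  then show "x \<in> runits" unfolding runits_def by blast
qed

lemma L'_eq: "L' = {x::'a rtriple. augment x \<in> nz_squares}"
proof (intro subset_antisym subsetI)
  fix x :: "'a rtriple" assume "x \<in> L'"
  then show "x \<in> {x. augment x \<in> nz_squares}" by (auto simp: L'_def augment_urep)
next
  fix x :: "'a rtriple" assume "x \<in> {x. augment x \<in> nz_squares}"
  then show "x \<in> L'" unfolding L'_def using urep_augment[of x] by blast
qed

lemma card_augment: "card {x::'a rtriple. P (augment x)} = card {t. P t} * 3 ^ m * 3 ^ m"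
proof -
  have "{(t, y, z). P t} = {t. P t} \<times> (UNIV :: 'a set) \<times> (UNIV :: 'a set)" by auto
  then have "card {x::'a rtriple. P (augment x)} = card ({t. P t} \<times> (UNIV :: 'a set) \<times> (UNIV :: 'a set))"
    using card_augment_coordinates[where P = "\<lambda>t _ _. P t"] by simp
  also have "\<dots> = card {t. P t} * (card (UNIV :: 'a set) * card (UNIV :: 'a set))"
    by (simp only: card_cartesian_product)
  finally show ?thesis by (simp add: card_field mult.assoc)
qed

lemma card_runits: "card (runits :: 'a rtriple set) = (3 ^ m - 1) * 3 ^ m * 3 ^ m"
  using card_augment[of "\<lambda>t. t \<noteq> 0"] card_nonzero by (simp add: runits_eq)

lemma card_L': "2 * card (L' :: 'a rtriple set) = (3 ^ m - 1) * 3 ^ m * 3 ^ m"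
  using card_augment[of "\<lambda>t. t \<in> nz_squares"] card_nz_squares by (simp add: L'_eq)

end

section \<open>Weights of the codewords of \<open>C(m)\<close>\<close>

definition rweight :: "'a::zero rtriple \<Rightarrow> nat" where
  "rweight z = (case z of (p, q, r) \<Rightarrow> of_bool (p \<noteq> 0) + of_bool (q \<noteq> 0) + of_bool (r \<noteq> 0))"

definition mul_u :: "'a rtriple \<Rightarrow> 'a rtriple" where
  "mul_u x = (case x of (a, b, c) \<Rightarrow> (c, a, b))"

lemma rmul_mul_u: "rmul b (mul_u x) = mul_u (rmul b x)"
  by (cases b; cases x) (simp add: rmul_def mul_u_def algebra_simps)

lemma augment_mul_u: "augment (mul_u x) = augment x"
  by (cases x) (simp add: augment_def mul_u_def algebra_simps)

lemma mul_u_mul_u_mul_u: "mul_u (mul_u (mul_u x)) = x"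
  by (cases x) (simp add: mul_u_def)

lemma mul_u_coordinates:
  "fst (mul_u x) = snd (snd x)" "fst (snd (mul_u x)) = fst x" "snd (snd (mul_u x)) = fst (snd x)"
  by (cases x; simp add: mul_u_def)+

context char_three_field
begin

lemma card_units_mul_u_shift:
  fixes b :: "'a rtriple"
  assumes "\<And>z. Q (mul_u z) = P z"
  shows "card (runits \<inter> {x. Q (rmul b x)}) = card (runits \<inter> {x. P (rmul b x)})"
proof (rule sym, rule bij_betw_same_card)
  show "bij_betw mul_u (runits \<inter> {x. P (rmul b x)}) (runits \<inter> {x. Q (rmul b x)})"
    by (rule bij_betw_byWitness[of _ "\<lambda>y. mul_u (mul_u y)"])
       (auto simp: mul_u_mul_u_mul_u rmul_mul_u runits_eq augment_mul_u assms simp flip: assms)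
qed

lemma sum_rweight_units:
  "(\<Sum>x\<in>runits. rweight (Tr m (rmul b x))) = 3 * card (runits \<inter> {x. tr (fst (rmul b x)) \<noteq> 0})"
proof -
  have "(\<Sum>x\<in>runits. rweight (Tr m (rmul b x)))
      = card (runits \<inter> {x. tr (fst (rmul b x)) \<noteq> 0}) + card (runits \<inter> {x. tr (fst (snd (rmul b x))) \<noteq> 0})
        + card (runits \<inter> {x. tr (snd (snd (rmul b x))) \<noteq> 0})"
    by (simp add: rweight_def Tr_def case_prod_beta sum.distrib)
  also have "card (runits \<inter> {x. tr (fst (snd (rmul b x))) \<noteq> 0}) = card (runits \<inter> {x. tr (fst (rmul b x)) \<noteq> 0})"
    by (rule card_units_mul_u_shift) (simp add: mul_u_coordinates)
  also have "card (runits \<inter> {x. tr (snd (snd (rmul b x))) \<noteq> 0}) = card (runits \<inter> {x. tr (fst (snd (rmul b x))) \<noteq> 0})"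
    by (rule card_units_mul_u_shift) (simp add: mul_u_coordinates)
  finally show ?thesis
    using card_units_mul_u_shift[of "\<lambda>z. tr (fst (snd z)) \<noteq> 0" "\<lambda>z. tr (fst z) \<noteq> 0" b] by (simp add: mul_u_coordinates)
qed

lemma card_affine_form_preimage:
  fixes \<alpha> \<beta> c :: 'a
  assumes "\<alpha> \<noteq> 0 \<or> \<beta> \<noteq> 0"
  shows "card {(y, z). P (c + \<alpha> * y + \<beta> * z)} = card {s. P s} * 3 ^ m"
proof -
  have "card {(y, z). P (c + \<alpha> * y + \<beta> * z)} = card ({s. P s} \<times> (UNIV :: 'a set))"
  proof (cases "\<alpha> \<noteq> 0")
    case True
    have "bij_betw (\<lambda>(y, z). (c + \<alpha> * y + \<beta> * z, z)) {(y, z). P (c + \<alpha> * y + \<beta> * z)} ({s. P s} \<times> UNIV)"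
      by (rule bij_betw_byWitness[of _ "\<lambda>(s, z). ((s - c - \<beta> * z) / \<alpha>, z)"])
         (use True in \<open>auto simp: field_simps\<close>)
    then show ?thesis by (rule bij_betw_same_card)
  next
    case False
    then have "\<beta> \<noteq> 0" using assms by simp
    have "bij_betw (\<lambda>(y, z). (c + \<alpha> * y + \<beta> * z, y)) {(y, z). P (c + \<alpha> * y + \<beta> * z)} ({s. P s} \<times> UNIV)"
      by (rule bij_betw_byWitness[of _ "\<lambda>(s, y). (y, (s - c - \<alpha> * y) / \<beta>)"])
         (use \<open>\<beta> \<noteq> 0\<close> in \<open>auto simp: field_simps\<close>)
    then show ?thesis by (rule bij_betw_same_card)
  qed
  then show ?thesis by (simp add: card_cartesian_product card_field)
qed

text \<open>In the coordinates \<open>(augment x, x\<^sub>1, x\<^sub>2)\<close> the first coordinate of \<open>b x\<close> is an affine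
  form; unless it only depends on \<open>augment x\<close>, each of its level sets is a plane.\<close>
lemma card_units_tr_first_coordinate:
  assumes "b \<noteq> (0, 0, 0)"
  shows "2 * 3 ^ m * 3 ^ m * (3 ^ m - 1) \<le> 3 * card (runits \<inter> {x. tr (fst (rmul b x)) \<noteq> 0})"
proof -
  obtain b0 b1 b2 where b: "b = (b0, b1, b2)" by (cases b)
  define \<alpha> where "\<alpha> = b2 - b0"
  define \<beta> where "\<beta> = b1 - b0"
  define N where "N = card {(t, y, z). t \<noteq> 0 \<and> tr (b0 * t + \<alpha> * y + \<beta> * z) \<noteq> 0}"
  have "fst (rmul b x) = b0 * augment x + \<alpha> * fst (snd x) + \<beta> * snd (snd x)" for x
    by (cases x) (simp add: b rmul_def augment_def \<alpha>_def \<beta>_def algebra_simps)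
  then have "card (runits \<inter> {x. tr (fst (rmul b x)) \<noteq> 0}) = N"
    using card_augment_coordinates[of "\<lambda>t y z. t \<noteq> 0 \<and> tr (b0 * t + \<alpha> * y + \<beta> * z) \<noteq> 0"]
    by (simp add: N_def runits_eq Int_def)
  moreover have "2 * 3 ^ m * 3 ^ m * (3 ^ m - 1) \<le> 3 * N"
  proof (cases "\<alpha> \<noteq> 0 \<or> \<beta> \<noteq> 0")
    case True
    have "{(t, y, z). t \<noteq> 0 \<and> tr (b0 * t + \<alpha> * y + \<beta> * z) \<noteq> 0}
        = (SIGMA t:{t. t \<noteq> 0}. {(y, z). tr (b0 * t + \<alpha> * y + \<beta> * z) \<noteq> 0})" by auto
    then have "N = (\<Sum>t\<in>{t. t \<noteq> 0}. card {(y, z). tr (b0 * t + \<alpha> * y + \<beta> * z) \<noteq> 0})"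
      by (simp add: N_def)
    also have "\<dots> = (\<Sum>t\<in>{t::'a. t \<noteq> 0}. card {s. tr s \<noteq> 0} * 3 ^ m)"
      by (intro sum.cong refl card_affine_form_preimage[OF True])
    also have "\<dots> = (3 ^ m - 1) * (card {s. tr s \<noteq> 0} * 3 ^ m)" by (simp add: card_nonzero)
    finally have "3 * N = (3 ^ m - 1) * ((3 * card {s. tr s \<noteq> 0}) * 3 ^ m)" by (simp only: mult_ac)
    then show ?thesis unfolding card_tr_nonzero by (simp only: mult_ac order_refl)
  next
    case False
    then have "b0 \<noteq> 0" using assms by (auto simp: b \<alpha>_def \<beta>_def)
    have "{(t, y, z). t \<noteq> 0 \<and> tr (b0 * t + \<alpha> * y + \<beta> * z) \<noteq> 0}
        = {t. tr (t * b0) \<noteq> 0} \<times> (UNIV :: 'a set) \<times> (UNIV :: 'a set)"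
      using False by (auto simp: mult.commute tr_zero)
    then have "N = card {t. tr (t * b0) \<noteq> 0} * (card (UNIV :: 'a set) * card (UNIV :: 'a set))"
      by (simp only: N_def card_cartesian_product)
    then have "N = card {s. tr s \<noteq> 0} * (3 ^ m * 3 ^ m)"
      by (simp only: card_field card_tr_scaled_nonzero[OF \<open>b0 \<noteq> 0\<close>])
    then have "3 * N = (3 * card {s. tr s \<noteq> 0}) * (3 ^ m * 3 ^ m)" by (simp only: mult_ac)
    then have "3 * N = 2 * 3 ^ m * 3 ^ m * 3 ^ m" unfolding card_tr_nonzero by (simp only: mult_ac)
    moreover have "2 * 3 ^ m * 3 ^ m * (3 ^ m - 1) \<le> 2 * 3 ^ m * 3 ^ m * (3 ^ m :: nat)" by simp
    ultimately show ?thesis by simp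
  qed
  ultimately show ?thesis by simp
qed

theorem weight_units_ge:
  fixes b :: "'a rtriple"
  assumes "b \<noteq> (0, 0, 0)"
  shows "2 * 3 ^ m * 3 ^ m * (3 ^ m - 1) \<le> (\<Sum>x\<in>runits. rweight (Tr m (rmul b x)))"
  using card_units_tr_first_coordinate[OF assms] by (simp add: sum_rweight_units)

lemma rweight_Tr_minus: "rweight (Tr m (rscale (-1) z)) = rweight (Tr m (z :: 'a rtriple))"
  by (cases z) (simp add: rweight_def Tr_def rscale_def tr_minus)

text \<open>For odd \<open>m\<close>, \<open>-1\<close> is a non-square, so negation exchanges \<open>L'\<close> with its complement in the units.\<close>
lemma runits_eq_L'_union:
  assumes "odd m"
  shows "runits = (L' \<union> rscale (-1) ` L' :: 'a rtriple set)" and "L' \<inter> rscale (-1) ` L' = ({} :: 'a rtriple set)"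
proof -
  have "x \<in> rscale (-1) ` L' \<longleftrightarrow> rscale (-1) x \<in> L'" for x :: "'a rtriple"
  proof
    assume "x \<in> rscale (-1) ` L'"
    then show "rscale (-1) x \<in> L'" by (auto simp: rscale_minus_one_involutive)
  next
    assume "rscale (-1) x \<in> L'"
    then show "x \<in> rscale (-1) ` L'" using rscale_minus_one_involutive[of x] by force
  qed
  then have neg: "x \<in> rscale (-1) ` L' \<longleftrightarrow> - augment x \<in> nz_squares" for x :: "'a rtriple"
    by (simp add: L'_eq augment_rscale)
  have nz: "t \<in> nz_squares \<Longrightarrow> t \<noteq> 0" for t :: 'a by (simp add: nz_squares_def)
  show "runits = (L' \<union> rscale (-1) ` L' :: 'a rtriple set)"
  proof (rule Set.set_eqI)
    fix x :: "'a rtriple"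
    show "x \<in> runits \<longleftrightarrow> x \<in> L' \<union> rscale (-1) ` L'"
      unfolding Un_iff neg unfolding runits_eq L'_eq mem_Collect_eq
      using nz_squares_iff_minus_not[OF assms, of "augment x"] nz[of "augment x"] nz[of "- augment x"]
      by auto
  qed
  show "L' \<inter> rscale (-1) ` L' = ({} :: 'a rtriple set)"
  proof (intro equals0I)
    fix x :: "'a rtriple" assume "x \<in> L' \<inter> rscale (-1) ` L'"
    then have "augment x \<in> nz_squares" "- augment x \<in> nz_squares" unfolding Int_iff neg by (auto simp: L'_eq)
    then show False using nz_squares_iff_minus_not[OF assms] nz by blast
  qed
qed

theorem weight_L'_ge:
  fixes b :: "'a rtriple"
  assumes "odd m" and "b \<noteq> (0, 0, 0)"
  shows "3 ^ m * 3 ^ m * (3 ^ m - 1) \<le> (\<Sum>x\<in>L'. rweight (Tr m (rmul b x)))"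
proof -
  let ?w = "\<lambda>x. rweight (Tr m (rmul b x))"
  have "inj_on (rscale (-1)) (L' :: 'a rtriple set)"
    by (metis inj_on_inverseI rscale_minus_one_involutive)
  then have "(\<Sum>x\<in>rscale (-1) ` L'. ?w x) = (\<Sum>x\<in>L'. ?w x)"
    by (simp add: sum.reindex o_def rmul_rscale_right rweight_Tr_minus)
  moreover have "(\<Sum>x\<in>runits. ?w x) = (\<Sum>x\<in>L'. ?w x) + (\<Sum>x\<in>rscale (-1) ` L'. ?w x)"
    unfolding runits_eq_L'_union(1)[OF assms(1)]
    by (rule sum.union_disjoint) (simp_all add: runits_eq_L'_union(2)[OF assms(1)])
  ultimately have "(\<Sum>x\<in>runits. ?w x) = 2 * (\<Sum>x\<in>L'. ?w x)" by simp
  then show ?thesis using weight_units_ge[OF assms(2)] by simp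
qed

end

section \<open>The Gray image of \<open>C(m)\<close>\<close>

lemma hamming_Nil: "hamming [] v = 0"
  by (simp add: hamming_def)

lemma hamming_Cons: "hamming (x # u) (y # v) = of_bool (x \<noteq> y) + hamming u v"
proof -
  have "{i. i < length (x # u) \<and> (x # u) ! i \<noteq> (y # v) ! i}
      = (if x \<noteq> y then {0} else {}) \<union> Suc ` {i. i < length u \<and> u ! i \<noteq> v ! i}"
    by (auto simp: image_iff less_Suc_eq_0_disj)
  then show ?thesis by (simp add: hamming_def card_image)
qed

lemma hamming_append: "length u = length u' \<Longrightarrow> hamming (u @ v) (u' @ v') = hamming u u' + hamming v v'"
proof (induction u arbitrary: u')
  case Nil
  then show ?case by (simp add: hamming_Nil)
next
  case (Cons x u)
  then obtain y u'' where "u' = y # u''" by (cases u') auto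
  with Cons show ?case by (simp add: hamming_Cons)
qed

lemma length_gray [simp]: "length (gray r) = 3"
  by (cases r) (simp add: gray_def)

lemma gray_vec_Cons: "gray_vec (map f (x # xs)) = gray (f x) @ gray_vec (map f xs)"
  by (simp add: gray_vec_def)

lemma length_gray_vec: "length (gray_vec (map f xs)) = 3 * length xs"
  by (induction xs) (simp_all add: gray_vec_def)

lemma hamming_gray_vec:
  "hamming (gray_vec (map f xs)) (gray_vec (map g xs)) = (\<Sum>x\<leftarrow>xs. hamming (gray (f x)) (gray (g x)))"
proof (induction xs)
  case Nil
  then show ?case by (simp add: gray_vec_def hamming_Nil)
next
  case (Cons x xs)
  then show ?case unfolding gray_vec_Cons by (simp add: hamming_append)
qed

lemma hamming_gray:
  "hamming (gray (a, b, c)) (gray (a', b', c'))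
     = of_bool (to_F3 a \<noteq> to_F3 a') + of_bool (to_F3 b \<noteq> to_F3 b') + of_bool (to_F3 c \<noteq> to_F3 c')"
  by (simp add: gray_def hamming_Cons hamming_Nil)

lemma ter_add_gray_vec:
  assumes "\<And>x. ter_add (gray (f x)) (gray (g x)) = gray (h x)"
  shows "ter_add (gray_vec (map f xs)) (gray_vec (map g xs)) = gray_vec (map h xs)"
  by (induction xs) (simp_all add: gray_vec_def ter_add_def assms[unfolded ter_add_def])

lemma ter_smult_gray_vec:
  assumes "\<And>x. ter_smult c (gray (f x)) = gray (h x)"
  shows "ter_smult c (gray_vec (map f xs)) = gray_vec (map h xs)"
  by (induction xs) (simp_all add: gray_vec_def ter_smult_def assms[unfolded ter_smult_def])

lemma gray_vec_words: "gray_vec (map f xs) \<in> ter_words (3 * length xs)"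
proof -
  have "set (gray_vec (map f xs)) \<subseteq> {0, 1, 2}"
    by (induction xs) (auto simp: gray_vec_def gray_def to_F3_def split: prod.splits)
  then show ?thesis by (simp add: ter_words_def length_gray_vec)
qed

definition gray_word :: "nat \<Rightarrow> 'a::comm_ring_1 rtriple list \<Rightarrow> 'a rtriple \<Rightarrow> int list" where
  "gray_word m xs a = gray_vec (map (\<lambda>x. Tr m (rmul a x)) xs)"

lemma gray_code_eq_range: "gray_code m xs = range (gray_word m xs)"
  by (auto simp: gray_code_def code_C_def gray_word_def)

context char_three_field
begin

lemma to_F3_values: "to_F3 (0::'a) = 0" "to_F3 (1::'a) = 1" "to_F3 (-1::'a) = 2"
  using one_neq_minus_one by (auto simp: to_F3_def)

lemma to_F3_tr_eq_iff: "to_F3 (tr x) = to_F3 (tr y) \<longleftrightarrow> tr (x - y) = 0"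
  using tr_values[of x] tr_values[of y] one_neq_minus_one
  by (auto simp: to_F3_values tr_diff)

lemma to_F3_tr_add: "(to_F3 (tr x) + to_F3 (tr y)) mod 3 = to_F3 (tr (x + y))"
  using tr_values[of x] tr_values[of y] by (auto simp: tr_add to_F3_values two_eq_minus_one)

lemma to_F3_tr_minus: "(2 * to_F3 (tr x)) mod 3 = to_F3 (tr (- x))"
  using tr_values[of x] by (auto simp: tr_minus to_F3_values)

lemma hamming_gray_word:
  fixes a a' :: "'a rtriple"
  assumes "distinct xs"
  shows "hamming (gray_word m xs a) (gray_word m xs a')
       = (\<Sum>x\<in>set xs. rweight (Tr m (rmul (radd a (rscale (-1) a')) x)))"
proof -
  have "hamming (gray (Tr m (rmul a x))) (gray (Tr m (rmul a' x)))
      = rweight (Tr m (rmul (radd a (rscale (-1) a')) x))" for x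
    by (simp add: rmul_diff Tr_def hamming_gray rweight_def to_F3_tr_eq_iff case_prod_beta)
  then show ?thesis
    using assms by (simp add: gray_word_def hamming_gray_vec sum_list_distinct_conv_sum_set)
qed

lemma gray_word_zero: "gray_word m xs (0, 0, (0::'a)) = replicate (3 * length xs) 0"
proof -
  have "rmul (0, 0, 0) x = ((0::'a), 0, 0)" for x by (cases x) (simp add: rmul_def)
  then show ?thesis
    by (induction xs) (simp_all add: gray_word_def gray_vec_def Tr_def tr_zero gray_def to_F3_def numeral_3_eq_3)
qed

lemma gray_word_add: "ter_add (gray_word m xs a) (gray_word m xs a') = gray_word m xs (radd a (a' :: 'a rtriple))"
  unfolding gray_word_def
  by (rule ter_add_gray_vec) (simp add: rmul_radd Tr_def gray_def ter_add_def to_F3_tr_add case_prod_beta)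

lemma gray_word_minus: "ter_smult 2 (gray_word m xs a) = gray_word m xs (rscale (-1) (a :: 'a rtriple))"
  unfolding gray_word_def rmul_rscale_left
  by (rule ter_smult_gray_vec) (simp add: Tr_def gray_def ter_smult_def rscale_def to_F3_tr_minus case_prod_beta)

lemma gray_code_linear: "ternary_linear_code (3 * length xs) (gray_code m (xs :: 'a rtriple list))"
  unfolding ternary_linear_code_def gray_code_eq_range
proof (intro conjI ballI)
  show "range (gray_word m xs) \<subseteq> ter_words (3 * length xs)"
    using gray_vec_words by (auto simp: gray_word_def)
  show "replicate (3 * length xs) 0 \<in> range (gray_word m xs)"
    using gray_word_zero[symmetric] by blast
  show "ter_add v w \<in> range (gray_word m xs)" if "v \<in> range (gray_word m xs)" "w \<in> range (gray_word m xs)" for v w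
    using that gray_word_add by auto
  show "ter_smult c w \<in> range (gray_word m xs)" if c: "c \<in> {0, 1, 2}" and w: "w \<in> range (gray_word m xs)" for c w
  proof -
    obtain a where a: "w = gray_word m xs a" using w by blast
    have "w \<in> ter_words (3 * length xs)" unfolding a gray_word_def by (rule gray_vec_words)
    then show ?thesis
      using c w ter_smult_zero ter_smult_one gray_word_zero[symmetric] gray_word_minus[of xs a]
      by (auto simp: a)
  qed
qed

lemma card_rtriple: "card (UNIV :: 'a rtriple set) = 3 ^ (3 * m)"
proof -
  have "card (UNIV :: 'a rtriple set) = card (UNIV :: 'a set) * (card (UNIV :: 'a set) * card (UNIV :: 'a set))"
    by (simp only: UNIV_Times_UNIV[symmetric] card_cartesian_product)
  then show ?thesis by (simp add: card_field power_mult[symmetric] power_add[symmetric] mult.commute)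
qed

lemma gray_code_dist:
  fixes xs :: "'a rtriple list"
  assumes "distinct xs" and "0 < D"
    and weights: "\<And>b::'a rtriple. b \<noteq> (0, 0, 0) \<Longrightarrow> D \<le> (\<Sum>x\<in>set xs. rweight (Tr m (rmul b x)))"
  shows "card (gray_code m xs) = 3 ^ (3 * m)" and "D \<le> min_dist (gray_code m xs)"
proof -
  have dist: "D \<le> hamming (gray_word m xs a) (gray_word m xs a')" if "a \<noteq> a'" for a a' :: "'a rtriple"
  proof -
    have "radd a (rscale (-1) a') \<noteq> (0, 0, 0)" using that radd_minus_eq_0 by blast
    then have "D \<le> (\<Sum>x\<in>set xs. rweight (Tr m (rmul (radd a (rscale (-1) a')) x)))" by (rule weights)
    then show ?thesis by (simp only: hamming_gray_word[OF \<open>distinct xs\<close>])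
  qed
  have inj: "inj (gray_word m xs)"
  proof (rule injI, rule ccontr)
    fix a a' :: "'a rtriple" assume "gray_word m xs a = gray_word m xs a'" "a \<noteq> a'"
    then show False using dist[of a a'] \<open>0 < D\<close> by (simp add: hamming_def)
  qed
  then show "card (gray_code m xs) = 3 ^ (3 * m)"
    unfolding gray_code_eq_range using card_image[OF inj] card_rtriple by simp
  let ?D = "{hamming v w | v w. v \<in> gray_code m xs \<and> w \<in> gray_code m xs \<and> v \<noteq> w}"
  have "?D \<subseteq> (\<lambda>(v, w). hamming v w) ` (gray_code m xs \<times> gray_code m xs)" by fast
  then have "finite ?D" by (rule finite_subset) (simp add: ternary_linear_code_finite[OF gray_code_linear])
  moreover have "gray_word m xs (0, 0, 0) \<noteq> gray_word m xs (1, 0, 0)" using inj by (simp add: inj_eq)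
  then have "?D \<noteq> {}" unfolding gray_code_eq_range by blast
  moreover have "D \<le> d" if d: "d \<in> ?D" for d
  proof -
    obtain a a' where d_eq: "d = hamming (gray_word m xs a) (gray_word m xs a')"
      and "gray_word m xs a \<noteq> gray_word m xs a'"
      using d unfolding gray_code_eq_range by blast
    then have "a \<noteq> a'" by blast
    then show ?thesis unfolding d_eq by (rule dist)
  qed
  ultimately show "D \<le> min_dist (gray_code m xs)" unfolding min_dist_def by (simp add: Min_ge_iff)
qed

theorem gray_code_optimal:
  fixes xs :: "'a rtriple list"
  assumes "distinct xs" and "0 < D"
    and weights: "\<And>b::'a rtriple. b \<noteq> (0, 0, 0) \<Longrightarrow> D \<le> (\<Sum>x\<in>set xs. rweight (Tr m (rmul b x)))"
    and exceeds: "3 * length xs < griesmer (3 * m) (D + 1)"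
  shows "optimal_ternary (3 * length xs) (gray_code m xs)"
  unfolding optimal_ternary_def
proof (intro conjI allI impI)
  let ?n = "3 * length xs" and ?C = "gray_code m xs"
  show lin: "ternary_linear_code ?n ?C" by (rule gray_code_linear)
  fix C' assume C': "ternary_linear_code ?n C' \<and> ter_dim ?n C' = ter_dim ?n ?C"
  then have "3 ^ (3 * m) \<le> card C'"
    using card_eq_ter_dim[OF lin] card_eq_ter_dim[of ?n C'] gray_code_dist(1)[OF assms(1-3)] by simp
  then have "min_dist C' \<le> D" using min_dist_le_if_griesmer_exceeds C' exceeds by blast
  then show "min_dist C' \<le> min_dist ?C" using gray_code_dist(2)[OF assms(1-3)] by linarith
qed

lemma three_power_gt_one: "1 < (3::nat) ^ m"
  by (intro one_less_power) (simp_all add: m_pos)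

theorem gray_code_L'_optimal:
  fixes xs :: "'a rtriple list"
  assumes "odd m" and xs: "distinct xs" "set xs = L'"
  shows "2 * length xs = (3 ^ m) ^ 2 * (3 ^ m - 1)" and "optimal_ternary (3 * length xs) (gray_code m xs)"
proof -
  show len: "2 * length xs = (3 ^ m) ^ 2 * (3 ^ m - 1)"
    using card_L' distinct_card[OF xs(1)] xs(2) by (simp add: power2_eq_square mult_ac)
  show "optimal_ternary (3 * length xs) (gray_code m xs)"
  proof (rule gray_code_optimal[OF xs(1)])
    show "(3 ^ m) ^ 2 * (3 ^ m - 1) \<le> (\<Sum>x\<in>set xs. rweight (Tr m (rmul b x)))"
      if "b \<noteq> (0, 0, 0)" for b :: "'a rtriple"
      using weight_L'_ge[OF \<open>odd m\<close> that] xs(2) by (simp add: power2_eq_square)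
    show "3 * length xs < griesmer (3 * m) ((3 ^ m) ^ 2 * (3 ^ m - 1) + 1)"
      using griesmer_exceeds[OF m_pos, of 1] len by simp
  qed (use three_power_gt_one in simp)
qed

theorem gray_code_runits_optimal:
  fixes xs :: "'a rtriple list"
  assumes xs: "distinct xs" "set xs = runits"
  shows "length xs = (3 ^ m) ^ 2 * (3 ^ m - 1)" and "optimal_ternary (3 * length xs) (gray_code m xs)"
proof -
  show len: "length xs = (3 ^ m) ^ 2 * (3 ^ m - 1)"
    using card_runits distinct_card[OF xs(1)] xs(2) by (simp add: power2_eq_square mult_ac)
  show "optimal_ternary (3 * length xs) (gray_code m xs)"
  proof (rule gray_code_optimal[OF xs(1)])
    show "2 * (3 ^ m) ^ 2 * (3 ^ m - 1) \<le> (\<Sum>x\<in>set xs. rweight (Tr m (rmul b x)))"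
      if "b \<noteq> (0, 0, 0)" for b :: "'a rtriple"
      using weight_units_ge[OF that] xs(2) by (simp add: power2_eq_square)
    show "3 * length xs < griesmer (3 * m) (2 * (3 ^ m) ^ 2 * (3 ^ m - 1) + 1)"
      using griesmer_exceeds[OF m_pos, of 2] len by (simp add: mult_ac)
  qed (use three_power_gt_one in simp)
qed

end

lemma three_power_difference: "(3::nat) ^ (3 * m + 1) - 3 ^ (2 * m + 1) = 3 * ((3 ^ m) ^ 2 * (3 ^ m - 1))"
proof -
  have "(3::nat) ^ (3 * m + 1) = 3 * ((3 ^ m) ^ 2 * 3 ^ m)" "(3::nat) ^ (2 * m + 1) = 3 * (3 ^ m) ^ 2"
    by (simp_all add: power_add mult.commute[of _ m] power_mult power2_eq_square power3_eq_cube)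
  then show ?thesis by (simp add: diff_mult_distrib2)
qed

theorem theorem6p1:
  fixes m :: nat
  assumes "card (UNIV :: ('a::{field, finite}) set) = 3 ^ m" and "m > 0"
  shows "(odd m \<longrightarrow>
           (\<forall>xs :: 'a rtriple list. distinct xs \<and> set xs = L' \<longrightarrow>
              3 * length xs = (3 ^ (3 * m + 1) - 3 ^ (2 * m + 1)) div 2 \<and>
              optimal_ternary (3 * length xs) (gray_code m xs)))
       \<and> (\<forall>xs :: 'a rtriple list. distinct xs \<and> set xs = runits \<longrightarrow>
              3 * length xs = 3 ^ (3 * m + 1) - 3 ^ (2 * m + 1) \<and>
              optimal_ternary (3 * length xs) (gray_code m xs))"
proof -
  interpret char_three_field m "TYPE('a)" using assms by unfold_locales
  show ?thesis
  proof (intro conjI impI allI)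
    fix xs :: "'a rtriple list" assume "odd m" and xs: "distinct xs \<and> set xs = L'"
    note L' = gray_code_L'_optimal[OF \<open>odd m\<close> conjunct1[OF xs] conjunct2[OF xs]]
    show "3 * length xs = (3 ^ (3 * m + 1) - 3 ^ (2 * m + 1)) div 2" "optimal_ternary (3 * length xs) (gray_code m xs)"
      unfolding three_power_difference L'(1)[symmetric] using L'(2) by simp_all
  next
    fix xs :: "'a rtriple list" assume xs: "distinct xs \<and> set xs = runits"
    note units = gray_code_runits_optimal[OF conjunct1[OF xs] conjunct2[OF xs]]
    show "3 * length xs = 3 ^ (3 * m + 1) - 3 ^ (2 * m + 1)" "optimal_ternary (3 * length xs) (gray_code m xs)"
      unfolding three_power_difference units(1)[symmetric] using units(2) by simp_all
  qed
qed

end
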